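(* Let $V$ be a unitary vertex operator superalgebra. Then there exist strong CFT type unitary simple vertex operator superalgebras $V^1,\dots,V^k$ (of the same central charge) such that $V$ is isomorphic to the direct sum vertex operator superalgebra $V^1\oplus\cdots\oplus V^k$.
   Context: A vertex operator superalgebra (VOSA) $(V,Y,\mathbf 1,\omega)$ has $L(n)=\omega_{n+1}$, grading $V=\bigoplus_{n\in\frac12\mathbb Z}V_n$ by $L(0)$-eigenvalues. A pair $(V,\phi)$ is a unitary VOSA if $\phi$ is an anti-linear involution of $V$ (anti-linear bijection of order 2 with $\phi(\mathbf 1)=\mathbf 1$, $\phi(\omega)=\omega$, $\phi(u_nv)=\phi(u)_n\phi(v)$) and there is a positive definite Hermitian form $(\,,)$ on $V$ with $(Y(e^{zL(1)}(-1)^{L(0)+2L(0)^2}z^{-2L(0)}a,z^{-1})u,v)=(u,Y(\phi(a),z)v)$ for all $a,u,v\in V$. $V$ is of strong CFT type if $V_0=\mathbb C\mathbf 1$, $V_n=0$ for $n<0$, and $L(1)V_1=0$. $V$ is simple if it has no ideals other than $0$ and $V$. The direct sum of VOSAs $V^1,\dots,V^k$ of equal central charge has underlying space $\bigoplus V^i$, componentwise vertex operators, vacuum $(\mathbf 1^1,\dots,\mathbf 1^k)$ and conformal vector $(\omega^1,\dots,\omega^k)$. *)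

theory Defs
  imports Complex_Main "HOL-Library.Function_Algebras"
begin

text \<open>A VOSA lives on a carrier subspace of an ambient additive group 'v, equipped with
  a complex scalar multiplication sc (a complex vector space structure).
  Y V a n b is the mode a_n b (n an integer); vac is the vacuum, cv the conformal vector.
  The L(0)-grading index h :: int stands for the weight h/2 (so weights range over 1/2 Z);
  the parity of a homogeneous vector of weight h/2 is h mod 2.\<close>

record 'v vosa =
  carrier :: "'v set"
  Y :: "'v \<Rightarrow> int \<Rightarrow> 'v \<Rightarrow> 'v"
  vac :: 'v
  cv :: 'v

definition fsum :: "(nat \<Rightarrow> 'a::comm_monoid_add) \<Rightarrow> 'a" where
  "fsum f = sum f {i. f i \<noteq> 0}"

definition gbin :: "int \<Rightarrow> nat \<Rightarrow> complex" where
  "gbin m i = (of_int m :: complex) gchoose i"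

definition sgn_int :: "int \<Rightarrow> complex" where
  "sgn_int k = (if even k then 1 else -1)"

definition Lop :: "'v vosa \<Rightarrow> int \<Rightarrow> 'v \<Rightarrow> 'v" where
  "Lop V n v = Y V (cv V) (n + 1) v"

definition wt :: "(complex \<Rightarrow> 'v::ab_group_add \<Rightarrow> 'v) \<Rightarrow> 'v vosa \<Rightarrow> int \<Rightarrow> 'v set" where
  "wt sc V h = {v \<in> carrier V. Lop V 0 v = sc (of_int h / 2) v}"

definition is_VOSA :: "(complex \<Rightarrow> 'v::ab_group_add \<Rightarrow> 'v) \<Rightarrow> 'v vosa \<Rightarrow> complex \<Rightarrow> bool" where
  "is_VOSA sc V c \<longleftrightarrow>
     vector_space sc \<and> module.subspace sc (carrier V) \<and>
     (\<forall>a\<in>carrier V. \<forall>n. \<forall>b\<in>carrier V. Y V a n b \<in> carrier V) \<and>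
     (\<forall>a\<in>carrier V. \<forall>n. \<forall>b1\<in>carrier V. \<forall>b2\<in>carrier V. \<forall>\<alpha>.
         Y V a n (sc \<alpha> b1 + b2) = sc \<alpha> (Y V a n b1) + Y V a n b2) \<and>
     (\<forall>a1\<in>carrier V. \<forall>a2\<in>carrier V. \<forall>n. \<forall>b\<in>carrier V. \<forall>\<alpha>.
         Y V (sc \<alpha> a1 + a2) n b = sc \<alpha> (Y V a1 n b) + Y V a2 n b) \<and>
     (\<forall>a\<in>carrier V. \<forall>b\<in>carrier V. \<exists>N. \<forall>n\<ge>N. Y V a n b = 0) \<and>
     vac V \<in> carrier V \<and>
     (\<forall>b\<in>carrier V. \<forall>n. Y V (vac V) n b = (if n = -1 then b else 0)) \<and>
     (\<forall>a\<in>carrier V. Y V a (-1) (vac V) = a \<and> (\<forall>n\<ge>0. Y V a n (vac V) = 0)) \<and>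
     cv V \<in> wt sc V 4 \<and>
     (\<forall>m n. \<forall>v\<in>carrier V.
         Lop V m (Lop V n v) - Lop V n (Lop V m v)
           = sc (of_int (m - n)) (Lop V (m + n) v)
             + (if m + n = 0 then sc (c / 12 * of_int (m ^ 3 - m)) v else 0)) \<and>
     (\<forall>a\<in>carrier V. \<forall>n. \<forall>b\<in>carrier V.
         Y V (Lop V (-1) a) n b = sc (- of_int n) (Y V a (n - 1) b)) \<and>
     carrier V \<subseteq> module.span sc (\<Union>h. wt sc V h) \<and>
     (\<forall>h. \<exists>S. finite S \<and> S \<subseteq> wt sc V h \<and> wt sc V h \<subseteq> module.span sc S) \<and>
     (\<exists>N. \<forall>h<N. wt sc V h = {0}) \<and>
     (\<forall>h1 h2. \<forall>a\<in>wt sc V h1. \<forall>b\<in>wt sc V h2. \<forall>u\<in>carrier V. \<forall>m n k::int.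
         fsum (\<lambda>i. sc (gbin m i) (Y V (Y V a (k + int i) b) (m + n - int i) u))
         = fsum (\<lambda>i. sc (sgn_int (int i) * gbin k i)
              (Y V a (m + k - int i) (Y V b (n + int i) u)
               - sc (sgn_int k * (if odd h1 \<and> odd h2 then -1 else 1))
                    (Y V b (n + k - int i) (Y V a (m + int i) u)))))"

definition antilinear_involution :: "(complex \<Rightarrow> 'v::ab_group_add \<Rightarrow> 'v) \<Rightarrow> 'v vosa \<Rightarrow> ('v \<Rightarrow> 'v) \<Rightarrow> bool" where
  "antilinear_involution sc V \<phi> \<longleftrightarrow>
     (\<forall>a\<in>carrier V. \<phi> a \<in> carrier V) \<and>
     (\<forall>a\<in>carrier V. \<forall>b\<in>carrier V. \<forall>\<alpha>. \<phi> (sc \<alpha> a + b) = sc (cnj \<alpha>) (\<phi> a) + \<phi> b) \<and>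
     (\<forall>a\<in>carrier V. \<phi> (\<phi> a) = a) \<and>
     \<phi> (vac V) = vac V \<and> \<phi> (cv V) = cv V \<and>
     (\<forall>a\<in>carrier V. \<forall>n. \<forall>b\<in>carrier V. \<phi> (Y V a n b) = Y V (\<phi> a) n (\<phi> b))"

definition pos_hermitian_form :: "(complex \<Rightarrow> 'v::ab_group_add \<Rightarrow> 'v) \<Rightarrow> 'v set \<Rightarrow> ('v \<Rightarrow> 'v \<Rightarrow> complex) \<Rightarrow> bool" where
  "pos_hermitian_form sc S B \<longleftrightarrow>
     (\<forall>u1\<in>S. \<forall>u2\<in>S. \<forall>v\<in>S. \<forall>\<alpha>. B (sc \<alpha> u1 + u2) v = \<alpha> * B u1 v + B u2 v) \<and>
     (\<forall>u\<in>S. \<forall>v\<in>S. B u v = cnj (B v u)) \<and>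
     (\<forall>v\<in>S. v \<noteq> 0 \<longrightarrow> 0 < Re (B v v))"

text \<open>Invariance (Y(e^{zL(1)}(-1)^{L(0)+2L(0)^2} z^{-2L(0)} a, z^{-1}) u, v) = (u, Y(phi a, z) v),
  written coefficientwise (coefficient of z^{-k-1}) for a homogeneous of weight h/2;
  then (-1)^{L(0)+2L(0)^2} a = (-1)^{h(h+1)/2} a and z^{-2L(0)} a = z^{-h} a.\<close>
definition invariant_form :: "(complex \<Rightarrow> 'v::ab_group_add \<Rightarrow> 'v) \<Rightarrow> 'v vosa \<Rightarrow> ('v \<Rightarrow> 'v) \<Rightarrow> ('v \<Rightarrow> 'v \<Rightarrow> complex) \<Rightarrow> bool" where
  "invariant_form sc V \<phi> B \<longleftrightarrow>
     (\<forall>h. \<forall>a\<in>wt sc V h. \<forall>u\<in>carrier V. \<forall>v\<in>carrier V. \<forall>k::int.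
        B u (Y V (\<phi> a) k v)
        = sgn_int (h * (h + 1) div 2) *
          fsum (\<lambda>j. (1 / of_nat (fact j)) * B (Y V ((Lop V 1 ^^ j) a) (h - k - 2 - int j) u) v))"

definition unitary_VOSA :: "(complex \<Rightarrow> 'v::ab_group_add \<Rightarrow> 'v) \<Rightarrow> 'v vosa \<Rightarrow> complex \<Rightarrow> ('v \<Rightarrow> 'v) \<Rightarrow> bool" where
  "unitary_VOSA sc V c \<phi> \<longleftrightarrow>
     is_VOSA sc V c \<and> antilinear_involution sc V \<phi> \<and>
     (\<exists>B. pos_hermitian_form sc (carrier V) B \<and> invariant_form sc V \<phi> B)"

definition strong_CFT_type :: "(complex \<Rightarrow> 'v::ab_group_add \<Rightarrow> 'v) \<Rightarrow> 'v vosa \<Rightarrow> bool" where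
  "strong_CFT_type sc V \<longleftrightarrow>
     wt sc V 0 = {sc \<alpha> (vac V) | \<alpha>. True} \<and>
     (\<forall>h<0. wt sc V h = {0}) \<and>
     (\<forall>v\<in>wt sc V 2. Lop V 1 v = 0)"

definition vosa_ideal :: "(complex \<Rightarrow> 'v::ab_group_add \<Rightarrow> 'v) \<Rightarrow> 'v vosa \<Rightarrow> 'v set \<Rightarrow> bool" where
  "vosa_ideal sc V I \<longleftrightarrow>
     I \<subseteq> carrier V \<and> module.subspace sc I \<and>
     (\<forall>a\<in>carrier V. \<forall>v\<in>I. \<forall>n. Y V a n v \<in> I \<and> Y V v n a \<in> I)"

definition simple_VOSA :: "(complex \<Rightarrow> 'v::ab_group_add \<Rightarrow> 'v) \<Rightarrow> 'v vosa \<Rightarrow> bool" where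
  "simple_VOSA sc V \<longleftrightarrow> (\<forall>I. vosa_ideal sc V I \<longrightarrow> I = {0} \<or> I = carrier V)"

text \<open>Direct sum V^0 + ... + V^(k-1), realised on finitely supported sequences.\<close>
definition dscale :: "(complex \<Rightarrow> 'v \<Rightarrow> 'v) \<Rightarrow> complex \<Rightarrow> (nat \<Rightarrow> 'v) \<Rightarrow> (nat \<Rightarrow> 'v)" where
  "dscale sc \<alpha> f = (\<lambda>i. sc \<alpha> (f i))"

definition dsum :: "nat \<Rightarrow> (nat \<Rightarrow> 'v::zero vosa) \<Rightarrow> (nat \<Rightarrow> 'v) vosa" where
  "dsum k Vs =
     \<lparr> carrier = {f. (\<forall>i<k. f i \<in> carrier (Vs i)) \<and> (\<forall>i\<ge>k. f i = 0)},
       Y = (\<lambda>f n g i. if i < k then Y (Vs i) (f i) n (g i) else 0),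
       vac = (\<lambda>i. if i < k then vac (Vs i) else 0),
       cv = (\<lambda>i. if i < k then cv (Vs i) else 0) \<rparr>"

definition vosa_iso :: "(complex \<Rightarrow> 'a::ab_group_add \<Rightarrow> 'a) \<Rightarrow> 'a vosa \<Rightarrow>
     (complex \<Rightarrow> 'b::ab_group_add \<Rightarrow> 'b) \<Rightarrow> 'b vosa \<Rightarrow> ('a \<Rightarrow> 'b) \<Rightarrow> bool" where
  "vosa_iso sc1 V sc2 W f \<longleftrightarrow>
     bij_betw f (carrier V) (carrier W) \<and>
     (\<forall>a\<in>carrier V. \<forall>b\<in>carrier V. \<forall>\<alpha>. f (sc1 \<alpha> a + b) = sc2 \<alpha> (f a) + f b) \<and>
     (\<forall>a\<in>carrier V. \<forall>n. \<forall>b\<in>carrier V. f (Y V a n b) = Y W (f a) n (f b)) \<and>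
     f (vac V) = vac W \<and> f (cv V) = cv W"

end

theory Submission
  imports Defs "HOL-Computational_Algebra.Fundamental_Theorem_Algebra"
begin

text \<open>Unitarity makes all weights nonnegative and forces \<open>L(-1) V\<^sub>0 = 0\<close>; hence for \<open>x \<in> V\<^sub>0\<close>
  the operator \<open>x\<^sub>-\<^sub>1\<close> commutes with all modes, and \<open>V\<^sub>0\<close> is a finite-dimensional commutative
  algebra with unit \<open>\<one>\<close> whose \<open>\<phi>\<close>-invariant elements act self-adjointly. If \<open>V\<^sub>0 = \<complex>\<one>\<close>,
  invariance and positivity of the form show that \<open>V\<close> is simple and of strong CFT type. Otherwise
  a self-adjoint non-scalar \<open>x \<in> V\<^sub>0\<close> splits \<open>\<one> = e + f\<close> into orthogonal \<open>\<phi>\<close>-invariant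
  idempotents, \<open>V \<cong> e\<^sub>-\<^sub>1 V \<oplus> f\<^sub>-\<^sub>1 V\<close>, and both summands are unitary with smaller weight-zero
  space, so induction on \<open>dim V\<^sub>0\<close> finishes the proof.\<close>

lemma fsum_eq_sum:
  assumes "finite A" "\<And>i. i \<notin> A \<Longrightarrow> f i = 0"
  shows "fsum f = sum f A"
proof -
  have "{i. f i \<noteq> 0} \<subseteq> A" using assms(2) by blast
  then show ?thesis unfolding fsum_def
    by (intro sum.mono_neutral_left[OF assms(1)]) auto
qed

lemma fsum_eq_0th:
  assumes "\<And>i. i \<noteq> 0 \<Longrightarrow> f i = 0"
  shows "fsum f = f 0"
  using fsum_eq_sum[of "{0}" f] assms by auto

lemma gbin_0_right [simp]: "gbin m 0 = 1"
  unfolding gbin_def by simp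

lemma gbin_0_left: "i \<noteq> 0 \<Longrightarrow> gbin 0 i = 0"
  unfolding gbin_def by (cases i) (auto simp: gbinomial_Suc)

lemma gbin_1_1 [simp]: "gbin 1 (Suc 0) = 1"
  unfolding gbin_def by simp

lemma gbin_1_ge_2: "i \<ge> 2 \<Longrightarrow> gbin 1 i = 0"
  unfolding gbin_def using binomial_gbinomial[of 1 i, where 'a=complex]
  by (simp add: binomial_eq_0)

lemma sgn_int_0 [simp]: "sgn_int 0 = 1"
  unfolding sgn_int_def by simp

section \<open>Operators on finitely spanned subspaces\<close>

definition poly_op :: "('a::zero \<Rightarrow> 'b::comm_monoid_add \<Rightarrow> 'b) \<Rightarrow> ('b \<Rightarrow> 'b) \<Rightarrow> 'a poly \<Rightarrow> 'b \<Rightarrow> 'b" where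
  "poly_op s T q v = (\<Sum>j\<le>degree q. s (coeff q j) ((T ^^ j) v))"

context module
begin

lemma span_image_lessThan_sum:
  fixes m :: nat
  shows "x \<in> span (f ` {..<m}) \<Longrightarrow> \<exists>c. x = (\<Sum>j<m. c j *s f j)"
proof (induction m arbitrary: x)
  case 0
  then show ?case by simp
next
  case (Suc m)
  then obtain k where "x - k *s f m \<in> span (f ` {..<m})"
    by (auto simp: lessThan_Suc span_breakdown_eq)
  then obtain c where c: "x - k *s f m = (\<Sum>j<m. c j *s f j)" using Suc.IH by blast
  have "(\<Sum>j<m. (c(m := k)) j *s f j) = (\<Sum>j<m. c j *s f j)" by (intro sum.cong) auto
  moreover have "x = (\<Sum>j<m. c j *s f j) + k *s f m" using c by (metis diff_eq_eq)
  ultimately have "x = (\<Sum>j<Suc m. (c(m := k)) j *s f j)" by simp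
  then show ?case by blast
qed

end

context vector_space
begin

lemma dim_less_if_finitely_spanned:
  assumes A: "subspace A" "A \<subseteq> A'" and S: "finite S" "A' \<subseteq> span S" and r: "r \<in> A'" "r \<notin> A"
  shows "dim A < dim A'"
proof -
  obtain BA where BA: "BA \<subseteq> A" "independent BA" "A \<subseteq> span BA" "card BA = dim A"
    using basis_exists by blast
  obtain BA' where BA': "BA' \<subseteq> A'" "independent BA'" "A' \<subseteq> span BA'" "card BA' = dim A'"
    using basis_exists by blast
  have "finite BA" using independent_span_bound[OF S(1) BA(2)] BA(1) A(2) S(2) by blast
  have "finite BA'" using independent_span_bound[OF S(1) BA'(2)] BA'(1) S(2) by blast
  have "r \<notin> span BA" using span_minimal[OF BA(1) A(1)] r(2) by blast
  then have "independent (insert r BA)" "r \<notin> BA"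
    using independent_insertI[OF _ BA(2)] span_superset by blast+
  moreover have "insert r BA \<subseteq> span BA'" using BA(1) A(2) r(1) BA'(3) by blast
  ultimately have "Suc (card BA) \<le> card BA'"
    using independent_span_bound[OF \<open>finite BA'\<close>] \<open>finite BA\<close> by fastforce
  then show ?thesis using BA(4) BA'(4) by simp
qed

end

locale subspace_endomorphism = vector_space +
  fixes U :: "'b set" and T :: "'b \<Rightarrow> 'b"
  assumes U_subspace: "subspace U"
    and T_closed: "\<And>u. u \<in> U \<Longrightarrow> T u \<in> U"
    and T_add: "\<And>u v. u \<in> U \<Longrightarrow> v \<in> U \<Longrightarrow> T (u + v) = T u + T v"
    and T_scale: "\<And>u a. u \<in> U \<Longrightarrow> T (a *s u) = a *s T u"
begin
lemma T_funpow_closed: "v \<in> U \<Longrightarrow> (T ^^ j) v \<in> U"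
  by (induction j) (auto simp: T_closed)

lemma T_sum: "(\<And>x. x \<in> A \<Longrightarrow> f x \<in> U) \<Longrightarrow> T (sum f A) = (\<Sum>x\<in>A. T (f x))"
proof (induction A rule: infinite_finite_induct)
  case (insert x F)
  have "sum f F \<in> U" by (intro subspace_sum[OF U_subspace]) (use insert.prems in auto)
  then show ?case using insert T_add[of "f x" "sum f F"] by auto
qed (use T_scale[of 0 0] U_subspace subspace_0 in auto)

lemma poly_op_eq_sum: "degree q < N \<Longrightarrow> poly_op scale T q v = (\<Sum>j<N. coeff q j *s (T ^^ j) v)"
  unfolding poly_op_def by (rule sum.mono_neutral_left) (auto simp: coeff_eq_0)

lemma poly_op_closed: "v \<in> U \<Longrightarrow> poly_op scale T q v \<in> U"
  unfolding poly_op_def by (intro subspace_sum[OF U_subspace] subspace_scale[OF U_subspace] T_funpow_closed)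

lemma poly_op_add: "poly_op scale T (p + q) v = poly_op scale T p v + poly_op scale T q v"
proof -
  define N where "N = Suc (max (degree p) (degree q))"
  have "degree (p + q) < N" unfolding N_def using degree_add_le[of p "max (degree p) (degree q)" q] by auto
  then have "poly_op scale T (p + q) v = (\<Sum>j<N. coeff (p + q) j *s (T ^^ j) v)"
    by (rule poly_op_eq_sum)
  also have "\<dots> = (\<Sum>j<N. coeff p j *s (T ^^ j) v) + (\<Sum>j<N. coeff q j *s (T ^^ j) v)"
    by (simp add: scale_left_distrib sum.distrib)
  also have "\<dots> = poly_op scale T p v + poly_op scale T q v"
    using poly_op_eq_sum[of p N v] poly_op_eq_sum[of q N v] N_def by simp
  finally show ?thesis .
qed

lemma poly_op_const: "poly_op scale T [:a:] v = a *s v"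
  unfolding poly_op_def by simp

lemma poly_op_linear_factor:
  assumes v: "v \<in> U"
  shows "poly_op scale T ([:-l, 1:] * q) v = T (poly_op scale T q v) - l *s poly_op scale T q v"
proof -
  define M where "M = Suc (degree q)"
  have e: "[:-l, 1:] * q = smult (-l) q + pCons 0 q"
    by (simp only: mult_pCons_left) (simp add: one_pCons[symmetric])
  have "degree (smult (-l) q) \<le> Suc (degree q)" using degree_smult_le[of "-l" q] by linarith
  moreover have "degree (pCons 0 q) \<le> Suc (degree q)" by (simp add: degree_pCons_eq_if)
  ultimately have "degree ([:-l, 1:] * q) < Suc M"
    unfolding e M_def using degree_add_le by (metis le_imp_less_Suc)
  then have "poly_op scale T ([:-l, 1:] * q) v
      = (\<Sum>j<Suc M. (- l * coeff q j) *s (T ^^ j) v) + (\<Sum>j<Suc M. coeff (pCons 0 q) j *s (T ^^ j) v)"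
    unfolding e by (simp only: poly_op_eq_sum coeff_add coeff_smult scale_left_distrib sum.distrib)
  also have "(\<Sum>j<Suc M. coeff (pCons 0 q) j *s (T ^^ j) v) = T (\<Sum>j<M. coeff q j *s (T ^^ j) v)"
    by (subst sum.lessThan_Suc_shift, subst T_sum) (auto simp: T_scale T_funpow_closed v U_subspace subspace_scale)
  also have "(\<Sum>j<M. coeff q j *s (T ^^ j) v) = poly_op scale T q v"
    using poly_op_eq_sum[of q M v] M_def by simp
  also have "(\<Sum>j<Suc M. (- l * coeff q j) *s (T ^^ j) v) = (- l) *s poly_op scale T q v"
    using poly_op_eq_sum[of q "Suc M" v] M_def by (simp only: scale_sum_right scale_scale)
  finally show ?thesis by (simp add: scale_minus_left)
qed

lemma poly_op_remainder:
  assumes v: "v \<in> U"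
  obtains g where "g \<in> U" "poly_op scale T R v = poly R l *s v + (T g - l *s g)"
proof -
  obtain G where "R - [:poly R l:] = [:-l, 1:] * G"
    using poly_eq_0_iff_dvd[of "R - [:poly R l:]" l] by (auto elim: dvdE)
  then have "R = [:poly R l:] + [:-l, 1:] * G" by (simp add: algebra_simps)
  then have "poly_op scale T R v = poly R l *s v + (T (poly_op scale T G v) - l *s poly_op scale T G v)"
    by (metis poly_op_add poly_op_const poly_op_linear_factor[OF v])
  then show ?thesis using that poly_op_closed[OF v] by blast
qed

lemma krylov_dependent:
  assumes S: "finite S" "U \<subseteq> span S" and v: "v \<in> U"
  shows "\<exists>m. (T ^^ m) v \<in> span ((\<lambda>j. (T ^^ j) v) ` {..<m})"
proof (rule ccontr)
  define p where "p j = (T ^^ j) v" for j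
  assume "\<nexists>m. (T ^^ m) v \<in> span ((\<lambda>j. (T ^^ j) v) ` {..<m})"
  then have none: "p m \<notin> span (p ` {..<m})" for m unfolding p_def by blast
  have indep: "independent (p ` {..<N}) \<and> card (p ` {..<N}) = N" for N
  proof (induction N)
    case (Suc N)
    have "p N \<notin> p ` {..<N}" using none[of N] span_superset[of "p ` {..<N}"] by blast
    moreover have "independent (insert (p N) (p ` {..<N}))"
      using Suc.IH none[of N] by (intro independent_insertI) auto
    ultimately show ?case using Suc.IH by (simp add: lessThan_Suc)
  qed (simp add: independent_empty)
  have "p ` {..<Suc (card S)} \<subseteq> span S" using T_funpow_closed[OF v] S(2) unfolding p_def by blast
  then have "card (p ` {..<Suc (card S)}) \<le> card S"
    using independent_span_bound[OF S(1) conjunct1[OF indep]] by blast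
  then show False using indep[of "Suc (card S)"] by simp
qed

lemma exists_annihilating_poly:
  assumes S: "finite S" "U \<subseteq> span S" and v: "v \<in> U"
  shows "\<exists>Q. Q \<noteq> 0 \<and> poly_op scale T Q v = 0"
proof -
  obtain m where "(T ^^ m) v \<in> span ((\<lambda>j. (T ^^ j) v) ` {..<m})"
    using krylov_dependent[OF S v] by blast
  then obtain c where c: "(T ^^ m) v = (\<Sum>j<m. c j *s (T ^^ j) v)"
    using span_image_lessThan_sum by blast
  define Q where "Q = monom 1 m - (\<Sum>j<m. monom (c j) j)"
  have coeff_Q: "coeff Q j = (if j = m then 1 else 0) - (if j < m then c j else 0)" for j
    unfolding Q_def by (auto simp: coeff_sum)
  then have "coeff Q m = 1" by simp
  then have "Q \<noteq> 0" by auto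
  have "degree Q < Suc m" using coeff_Q by (intro le_imp_less_Suc degree_le) auto
  then have "poly_op scale T Q v = (\<Sum>j<Suc m. coeff Q j *s (T ^^ j) v)" by (rule poly_op_eq_sum)
  also have "\<dots> = (\<Sum>j<m. (- c j) *s (T ^^ j) v) + (T ^^ m) v" by (simp add: coeff_Q)
  also have "\<dots> = 0" using c by (simp add: scale_minus_left sum_negf)
  finally have "poly_op scale T Q v = 0" .
  with \<open>Q \<noteq> 0\<close> show ?thesis by blast
qed

lemma minimal_annihilating_poly:
  assumes "finite S" "U \<subseteq> span S" and "v \<in> U"
  obtains Q where "Q \<noteq> 0" "poly_op scale T Q v = 0"
    "\<And>P. P \<noteq> 0 \<Longrightarrow> degree P < degree Q \<Longrightarrow> poly_op scale T P v \<noteq> 0"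
proof -
  obtain Q0 where "Q0 \<noteq> 0 \<and> poly_op scale T Q0 v = 0"
    using exists_annihilating_poly[OF assms] by blast
  then have "\<exists>Q. (Q \<noteq> 0 \<and> poly_op scale T Q v = 0) \<and>
      (\<forall>P. P \<noteq> 0 \<and> poly_op scale T P v = 0 \<longrightarrow> degree Q \<le> degree P)"
    by (rule ex_has_least_nat)
  then obtain Q where Q: "Q \<noteq> 0" "poly_op scale T Q v = 0"
    and least: "\<And>P. P \<noteq> 0 \<Longrightarrow> poly_op scale T P v = 0 \<Longrightarrow> degree Q \<le> degree P"
    by blast
  show ?thesis
  proof (rule that[OF Q])
    fix P :: "'a poly" assume "P \<noteq> 0" "degree P < degree Q"
    then show "poly_op scale T P v \<noteq> 0" using least[of P] by linarith
  qed
qed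

end

text \<open>The eigenvector is \<open>w = R(T) v\<close>, where \<open>(X - l) R\<close> is the minimal annihilating polynomial
  of \<open>v\<close>. The hypothesis on \<open>T\<close> (no nilpotent part on generalised eigenspaces) forces
  \<open>R(l) \<noteq> 0\<close>, and dividing \<open>R\<close> by \<open>X - l\<close> gives \<open>w = R(l) v + (T - l) g\<close>.\<close>
lemma eigenvector_plus_range:
  fixes sc :: "complex \<Rightarrow> 'v::ab_group_add \<Rightarrow> 'v"
  assumes "subspace_endomorphism sc U T"
    and S: "finite S" "U \<subseteq> module.span sc S"
    and v: "v \<in> U" "v \<noteq> 0"
    and semisimple: "\<And>l z w. z \<in> U \<Longrightarrow> w \<in> U \<Longrightarrow> w \<noteq> 0 \<Longrightarrow> T w = sc l w \<Longrightarrow>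
      T (T z - sc l z) - sc l (T z - sc l z) = 0 \<Longrightarrow> T z - sc l z = 0"
  shows "\<exists>l k r. k \<in> U \<and> k \<noteq> 0 \<and> T k = sc l k \<and> r \<in> U \<and> v = k + (T r - sc l r)"
proof -
  interpret subspace_endomorphism sc U T by fact
  obtain Q where Q: "Q \<noteq> 0" "poly_op sc T Q v = 0"
    and minimal: "\<And>P. P \<noteq> 0 \<Longrightarrow> degree P < degree Q \<Longrightarrow> poly_op sc T P v \<noteq> 0"
    using minimal_annihilating_poly[OF S v(1)] by blast
  have "degree Q \<noteq> 0"
  proof
    assume "degree Q = 0"
    then have "poly_op sc T Q v = sc (coeff Q 0) v" unfolding poly_op_def by simp
    then show False using Q v(2) \<open>degree Q = 0\<close> leading_coeff_0_iff by fastforce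
  qed
  then have "\<not> constant (poly Q)" using constant_degree[of Q] by simp
  then obtain l where "poly Q l = 0" using fundamental_theorem_of_algebra by blast
  then obtain R where QR: "Q = [:-l, 1:] * R" using poly_eq_0_iff_dvd by (metis dvdE)
  have R0: "R \<noteq> 0" using QR Q(1) by auto
  have deg_R: "degree R < degree Q" using degree_mult_eq[of "[:-l, 1:]" R] R0 QR by simp
  define w where "w = poly_op sc T R v"
  have wU: "w \<in> U" unfolding w_def using poly_op_closed[OF v(1)] .
  have w0: "w \<noteq> 0" unfolding w_def using minimal[OF R0 deg_R] .
  have Tw: "T w = sc l w" using Q(2) poly_op_linear_factor[OF v(1), of l R] QR unfolding w_def by simp
  have Rl: "poly R l \<noteq> 0"
  proof
    assume "poly R l = 0"
    then obtain R' where RR': "R = [:-l, 1:] * R'" using poly_eq_0_iff_dvd by (metis dvdE)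
    define z where "z = poly_op sc T R' v"
    have zU: "z \<in> U" unfolding z_def using poly_op_closed[OF v(1)] .
    have wz: "w = T z - sc l z" unfolding w_def z_def RR' using poly_op_linear_factor[OF v(1)] by simp
    then have "T z - sc l z = 0" using semisimple[OF zU wU w0 Tw] Tw by simp
    then show False using w0 wz by simp
  qed
  obtain g where gU: "g \<in> U" and w_split: "w = sc (poly R l) v + (T g - sc l g)"
    using poly_op_remainder[OF v(1), of R l] unfolding w_def by blast
  define k where "k = sc (1 / poly R l) w"
  define r where "r = sc (- (1 / poly R l)) g"
  have "T k = sc l k" unfolding k_def using T_scale[OF wU] Tw by (simp add: scale_left_commute)
  moreover have "T r - sc l r = sc (- (1 / poly R l)) (T g - sc l g)"
    unfolding r_def using T_scale[OF gU, of "- (1 / poly R l)"]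
    by (simp add: scale_right_diff_distrib scale_left_commute)
  then have "v = k + (T r - sc l r)"
    unfolding k_def using w_split Rl by (simp add: scale_right_distrib scale_minus_left)
  moreover have "k \<in> U" unfolding k_def by (rule subspace_scale[OF U_subspace wU])
  moreover have "r \<in> U" unfolding r_def by (rule subspace_scale[OF U_subspace gU])
  moreover have "k \<noteq> 0" unfolding k_def using w0 Rl by simp
  ultimately show ?thesis by blast
qed

section \<open>Sub-VOSAs and direct sums\<close>

definition idempotent_subvosa :: "'v::ab_group_add vosa \<Rightarrow> 'v \<Rightarrow> 'v vosa" where
  "idempotent_subvosa V e =
     \<lparr>carrier = {v \<in> carrier V. Y V e (-1) v = v}, Y = Y V, vac = e, cv = Y V e (-1) (cv V)\<rparr>"

lemma idempotent_subvosa_simps [simp]: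
  "carrier (idempotent_subvosa V e) = {v \<in> carrier V. Y V e (-1) v = v}"
  "Y (idempotent_subvosa V e) = Y V"
  "vac (idempotent_subvosa V e) = e"
  "cv (idempotent_subvosa V e) = Y V e (-1) (cv V)"
  unfolding idempotent_subvosa_def by simp_all

lemma vosa_isoD:
  assumes "vosa_iso sc1 V sc2 W f"
  shows "bij_betw f (carrier V) (carrier W)"
    "\<And>a b \<alpha>. a \<in> carrier V \<Longrightarrow> b \<in> carrier V \<Longrightarrow> f (sc1 \<alpha> a + b) = sc2 \<alpha> (f a) + f b"
    "\<And>a n b. a \<in> carrier V \<Longrightarrow> b \<in> carrier V \<Longrightarrow> f (Y V a n b) = Y W (f a) n (f b)"
    "f (vac V) = vac W" "f (cv V) = cv W"
  using assms unfolding vosa_iso_def by blast+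

lemma dsum_simps [simp]:
  "carrier (dsum k Vs) = {f. (\<forall>i<k. f i \<in> carrier (Vs i)) \<and> (\<forall>i\<ge>k. f i = 0)}"
  "Y (dsum k Vs) = (\<lambda>f n g i. if i < k then Y (Vs i) (f i) n (g i) else 0)"
  "vac (dsum k Vs) = (\<lambda>i. if i < k then vac (Vs i) else 0)"
  "cv (dsum k Vs) = (\<lambda>i. if i < k then cv (Vs i) else 0)"
  unfolding dsum_def by simp_all

definition append_family :: "nat \<Rightarrow> (nat \<Rightarrow> 'a) \<Rightarrow> (nat \<Rightarrow> 'a) \<Rightarrow> nat \<Rightarrow> 'a" where
  "append_family k x y i = (if i < k then x i else y (i - k))"

lemma append_family_eq_iff:
  assumes "x \<in> carrier (dsum k Vs)" "x' \<in> carrier (dsum k Vs)"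
  shows "append_family k x y = append_family k x' y' \<longleftrightarrow> x = x' \<and> y = y'"
proof
  assume eq: "append_family k x y = append_family k x' y'"
  have "x i = x' i" for i
    using fun_cong[OF eq, of i] assms by (cases "i < k") (auto simp: append_family_def)
  moreover have "y j = y' j" for j
    using fun_cong[OF eq, of "j + k"] by (simp add: append_family_def)
  ultimately show "x = x' \<and> y = y'" by auto
qed simp

lemma dsum_append_carrier_iff:
  "z \<in> carrier (dsum (k1 + k2) (append_family k1 Vs1 Vs2)) \<longleftrightarrow>
    (\<exists>x y. x \<in> carrier (dsum k1 Vs1) \<and> y \<in> carrier (dsum k2 Vs2) \<and> z = append_family k1 x y)"
proof
  assume z: "z \<in> carrier (dsum (k1 + k2) (append_family k1 Vs1 Vs2))"
  define x where "x i = (if i < k1 then z i else 0)" for i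
  define y where "y j = z (j + k1)" for j
  have "z i \<in> carrier (Vs1 i)" if "i < k1" for i
    using z that by (auto dest!: spec[of _ i] simp: append_family_def)
  then have "x \<in> carrier (dsum k1 Vs1)" unfolding x_def by auto
  moreover have "y \<in> carrier (dsum k2 Vs2)"
  proof -
    have "z (j + k1) \<in> carrier (Vs2 j)" if "j < k2" for j
      using z that by (auto dest!: spec[of _ "j + k1"] simp: append_family_def)
    then show ?thesis using z unfolding y_def by auto
  qed
  moreover have "z = append_family k1 x y" unfolding x_def y_def append_family_def by auto
  ultimately show "\<exists>x y. x \<in> carrier (dsum k1 Vs1) \<and> y \<in> carrier (dsum k2 Vs2) \<and> z = append_family k1 x y"
    by blast
qed (auto simp: append_family_def)

lemma dsum_append_Y:
  "Y (dsum (k1 + k2) (append_family k1 Vs1 Vs2)) (append_family k1 x y) n (append_family k1 x' y')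
    = append_family k1 (Y (dsum k1 Vs1) x n x') (Y (dsum k2 Vs2) y n y')"
  by (rule ext) (auto simp: append_family_def)

lemma dsum_append_vac:
  "vac (dsum (k1 + k2) (append_family k1 Vs1 Vs2)) = append_family k1 (vac (dsum k1 Vs1)) (vac (dsum k2 Vs2))"
  by (rule ext) (auto simp: append_family_def)

lemma dsum_append_cv:
  "cv (dsum (k1 + k2) (append_family k1 Vs1 Vs2)) = append_family k1 (cv (dsum k1 Vs1)) (cv (dsum k2 Vs2))"
  by (rule ext) (auto simp: append_family_def)

lemma append_family_linear:
  "append_family k (dscale sc \<alpha> x + x') (dscale sc \<alpha> y + y')
    = dscale sc \<alpha> (append_family k x y) + append_family k x' y'"
  by (auto simp: append_family_def dscale_def)

definition simple_decomposition :: "(complex \<Rightarrow> 'v::ab_group_add \<Rightarrow> 'v) \<Rightarrow> complex \<Rightarrow> 'v vosa \<Rightarrow> bool" where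
  "simple_decomposition sc c V \<longleftrightarrow>
     (\<exists>(k::nat) (Vs :: nat \<Rightarrow> 'v vosa).
        (\<forall>i<k. (\<exists>\<psi>. unitary_VOSA sc (Vs i) c \<psi>) \<and> strong_CFT_type sc (Vs i) \<and> simple_VOSA sc (Vs i)) \<and>
        (\<exists>f. vosa_iso sc V (dscale sc) (dsum k Vs) f))"

section \<open>Vertex operator superalgebras\<close>

locale vosa = vector_space sc for sc :: "complex \<Rightarrow> 'v::ab_group_add \<Rightarrow> 'v" +
  fixes V :: "'v vosa" and c :: complex
  assumes carrier_subspace: "subspace (carrier V)"
    and Y_closed [rule_format]: "\<forall>a\<in>carrier V. \<forall>n. \<forall>b\<in>carrier V. Y V a n b \<in> carrier V"
    and Y_linear_right [rule_format]: "\<forall>a\<in>carrier V. \<forall>n. \<forall>b1\<in>carrier V. \<forall>b2\<in>carrier V. \<forall>\<alpha>.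
         Y V a n (sc \<alpha> b1 + b2) = sc \<alpha> (Y V a n b1) + Y V a n b2"
    and Y_linear_left [rule_format]: "\<forall>a1\<in>carrier V. \<forall>a2\<in>carrier V. \<forall>n. \<forall>b\<in>carrier V. \<forall>\<alpha>.
         Y V (sc \<alpha> a1 + a2) n b = sc \<alpha> (Y V a1 n b) + Y V a2 n b"
    and Y_truncation [rule_format]: "\<forall>a\<in>carrier V. \<forall>b\<in>carrier V. \<exists>N. \<forall>n\<ge>N. Y V a n b = 0"
    and vacuum_closed: "vac V \<in> carrier V"
    and vacuum_Y [rule_format]: "\<forall>b\<in>carrier V. \<forall>n. Y V (vac V) n b = (if n = -1 then b else 0)"
    and vacuum_creation [rule_format]: "\<forall>a\<in>carrier V. Y V a (-1) (vac V) = a \<and> (\<forall>n\<ge>0. Y V a n (vac V) = 0)"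
    and omega_weight: "cv V \<in> wt sc V 4"
    and virasoro [rule_format]: "\<forall>m n. \<forall>v\<in>carrier V.
         Lop V m (Lop V n v) - Lop V n (Lop V m v)
           = sc (of_int (m - n)) (Lop V (m + n) v)
             + (if m + n = 0 then sc (c / 12 * of_int (m ^ 3 - m)) v else 0)"
    and L_minus1_derivative [rule_format]: "\<forall>a\<in>carrier V. \<forall>n. \<forall>b\<in>carrier V.
         Y V (Lop V (-1) a) n b = sc (- of_int n) (Y V a (n - 1) b)"
    and carrier_span_weights: "carrier V \<subseteq> span (\<Union>h. wt sc V h)"
    and weight_space_finite_span [rule_format]: "\<forall>h. \<exists>S. finite S \<and> S \<subseteq> wt sc V h \<and> wt sc V h \<subseteq> span S"
    and weights_bounded_below: "\<exists>N. \<forall>h<N. wt sc V h = {0}"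
    and jacobi [rule_format]: "\<forall>h1 h2. \<forall>a\<in>wt sc V h1. \<forall>b\<in>wt sc V h2. \<forall>u\<in>carrier V. \<forall>m n k::int.
         fsum (\<lambda>i. sc (gbin m i) (Y V (Y V a (k + int i) b) (m + n - int i) u))
         = fsum (\<lambda>i. sc (sgn_int (int i) * gbin k i)
              (Y V a (m + k - int i) (Y V b (n + int i) u)
               - sc (sgn_int k * (if odd h1 \<and> odd h2 then -1 else 1))
                    (Y V b (n + k - int i) (Y V a (m + int i) u))))"

lemma vosa_iff_is_VOSA: "vosa sc V c \<longleftrightarrow> is_VOSA sc V c"
  unfolding vosa_def vosa_axioms_def is_VOSA_def by (simp only: conj_assoc)

context vosa
begin

abbreviation "C \<equiv> carrier V"
abbreviation "YY \<equiv> Y V"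
abbreviation "vacuum \<equiv> vac V"
abbreviation "omega \<equiv> cv V"
abbreviation "L \<equiv> Lop V"
abbreviation "W \<equiv> wt sc V"

lemma creation: "a \<in> C \<Longrightarrow> YY a (-1) vacuum = a"
  using vacuum_creation by blast

lemma creation_nonneg: "a \<in> C \<Longrightarrow> n \<ge> 0 \<Longrightarrow> YY a n vacuum = 0"
  using vacuum_creation by blast

lemma omega_closed: "omega \<in> C"
  using omega_weight unfolding wt_def by blast

lemma wt_subset: "W h \<subseteq> C"
  unfolding wt_def by blast

lemma wtD: "v \<in> W h \<Longrightarrow> v \<in> C \<and> L 0 v = sc (of_int h / 2) v"
  unfolding wt_def by blast

lemma wtI: "v \<in> C \<Longrightarrow> L 0 v = sc (of_int h / 2) v \<Longrightarrow> v \<in> W h"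
  unfolding wt_def by blast

lemma carrier_0: "0 \<in> C"
  using carrier_subspace subspace_0 by blast
lemma carrier_add: "x \<in> C \<Longrightarrow> y \<in> C \<Longrightarrow> x + y \<in> C"
  using carrier_subspace subspace_add by blast
lemma carrier_scale: "x \<in> C \<Longrightarrow> sc a x \<in> C"
  using carrier_subspace subspace_scale by blast
lemma carrier_diff: "x \<in> C \<Longrightarrow> y \<in> C \<Longrightarrow> x - y \<in> C"
  using carrier_subspace subspace_diff by blast
lemma carrier_sum: "(\<And>x. x \<in> A \<Longrightarrow> f x \<in> C) \<Longrightarrow> sum f A \<in> C"
  using carrier_subspace subspace_sum by blast

lemma Y_add_right: "a \<in> C \<Longrightarrow> b1 \<in> C \<Longrightarrow> b2 \<in> C \<Longrightarrow> YY a n (b1 + b2) = YY a n b1 + YY a n b2"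
  using Y_linear_right[of a b1 b2 n 1] by simp
lemma Y_0_right [simp]: "a \<in> C \<Longrightarrow> YY a n 0 = 0"
  using Y_add_right[of a 0 0 n] carrier_0 by simp
lemma Y_scale_right: "a \<in> C \<Longrightarrow> b \<in> C \<Longrightarrow> YY a n (sc \<alpha> b) = sc \<alpha> (YY a n b)"
  using Y_linear_right[of a b 0 n \<alpha>] carrier_0 by simp
lemma Y_diff_right: "a \<in> C \<Longrightarrow> b1 \<in> C \<Longrightarrow> b2 \<in> C \<Longrightarrow> YY a n (b1 - b2) = YY a n b1 - YY a n b2"
  using Y_linear_right[of a b2 "b1 - b2" n 1] carrier_diff by (simp add: eq_diff_eq)
lemma Y_add_left: "a1 \<in> C \<Longrightarrow> a2 \<in> C \<Longrightarrow> b \<in> C \<Longrightarrow> YY (a1 + a2) n b = YY a1 n b + YY a2 n b"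
  using Y_linear_left[of a1 a2 b 1 n] by simp
lemma Y_0_left [simp]: "b \<in> C \<Longrightarrow> YY 0 n b = 0"
  using Y_add_left[of 0 0 b n] carrier_0 by simp
lemma Y_scale_left: "a \<in> C \<Longrightarrow> b \<in> C \<Longrightarrow> YY (sc \<alpha> a) n b = sc \<alpha> (YY a n b)"
  using Y_linear_left[of a 0 b \<alpha> n] carrier_0 by simp

lemma Y_sum_right:
  "a \<in> C \<Longrightarrow> (\<And>x. x \<in> A \<Longrightarrow> f x \<in> C) \<Longrightarrow> YY a n (sum f A) = (\<Sum>x\<in>A. YY a n (f x))"
proof (induction A rule: infinite_finite_induct)
  case (insert x F)
  have "sum f F \<in> C" using insert.prems by (intro carrier_sum) auto
  then show ?case using insert Y_add_right[of a "f x" "sum f F" n] by auto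
qed auto

lemma L_closed: "v \<in> C \<Longrightarrow> L n v \<in> C"
  unfolding Lop_def using Y_closed omega_closed by blast
lemma L_add: "x \<in> C \<Longrightarrow> y \<in> C \<Longrightarrow> L n (x + y) = L n x + L n y"
  unfolding Lop_def using Y_add_right omega_closed by blast
lemma L_scale: "x \<in> C \<Longrightarrow> L n (sc a x) = sc a (L n x)"
  unfolding Lop_def using Y_scale_right omega_closed by blast
lemma L_0 [simp]: "L n 0 = 0"
  unfolding Lop_def using omega_closed by simp
lemma L_sum: "(\<And>x. x \<in> A \<Longrightarrow> f x \<in> C) \<Longrightarrow> L n (sum f A) = (\<Sum>x\<in>A. L n (f x))"
  unfolding Lop_def using Y_sum_right omega_closed by blast
lemma L_funpow_closed: "v \<in> C \<Longrightarrow> (L n ^^ j) v \<in> C"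
  by (induction j) (auto simp: L_closed)
lemma L_funpow_0: "(L n ^^ j) 0 = 0"
  by (induction j) auto

lemma wt_subspace: "subspace (W h)"
  unfolding subspace_def wt_def using carrier_0 carrier_add carrier_scale L_add L_scale
  by (auto simp: scale_right_distrib scale_left_commute)

lemma wt_0: "0 \<in> W h"
  using wt_subspace subspace_0 by blast

lemma L_wt: assumes "v \<in> W h" shows "L n v \<in> W (h - 2 * n)"
proof -
  have v: "v \<in> C" "L 0 v = sc (of_int h / 2) v" using assms wtD by auto
  have "L 0 (L n v) - L n (L 0 v) = sc (of_int (- n)) (L n v)"
    using virasoro[OF v(1), of 0 n] by simp
  then have "L 0 (L n v) = sc (of_int (- n)) (L n v) + sc (of_int h / 2) (L n v)"
    using v L_scale by (simp add: algebra_simps)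
  also have "\<dots> = sc (of_int (h - 2 * n) / 2) (L n v)"
    by (simp add: scale_left_distrib[symmetric] field_simps)
  finally show ?thesis using L_closed v by (intro wtI) auto
qed

lemma L_funpow_wt: "v \<in> W h \<Longrightarrow> (L n ^^ j) v \<in> W (h - 2 * n * int j)"
proof (induction j)
  case (Suc j)
  have "L n ((L n ^^ j) v) \<in> W (h - 2 * n * int j - 2 * n)" using L_wt[OF Suc.IH[OF Suc.prems]] .
  then show ?case by (simp add: algebra_simps)
qed auto

lemma L_vacuum: "n \<ge> -1 \<Longrightarrow> L n vacuum = 0"
  unfolding Lop_def using creation_nonneg omega_closed by simp

lemma L1_omega: "L 1 omega = 0"
proof -
  have "L (-2) vacuum = omega"
    unfolding Lop_def using creation omega_closed by simp
  then show ?thesis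
    using virasoro[OF vacuum_closed, of 1 "-2"] L_vacuum[of 1] L_vacuum[of "-1"] by simp
qed

lemma vacuum_wt: "vacuum \<in> W 0"
  using L_vacuum[of 0] vacuum_closed by (intro wtI) auto

lemma vosa_iso_dsum_single: "vosa_iso sc V (dscale sc) (dsum 1 (\<lambda>_. V)) (\<lambda>v i. if i = 0 then v else 0)"
  unfolding vosa_iso_def bij_betw_def
proof (intro conjI ballI allI)
  show "inj_on (\<lambda>v i. if i = 0 then v else 0) C"
  proof (rule inj_onI)
    fix v w assume "(\<lambda>i. if i = 0 then v else 0) = (\<lambda>i. if i = 0 then w else 0)"
    from fun_cong[OF this, of 0] show "v = w" by simp
  qed
  have "G = (\<lambda>i. if i = 0 then G 0 else 0)" if "G \<in> carrier (dsum 1 (\<lambda>_. V))" for G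
    using that by auto
  then show "(\<lambda>v i. if i = 0 then v else 0) ` C = carrier (dsum 1 (\<lambda>_. V))"
    by (auto intro!: image_eqI)
qed (auto simp: dscale_def)

lemma weight_decomposition_subspace:
  "subspace {v. \<exists>H w. finite H \<and> (\<forall>h. w h \<in> W h) \<and> (\<forall>h. h \<notin> H \<longrightarrow> w h = 0) \<and> v = (\<Sum>h\<in>H. w h)}"
  (is "subspace ?S")
proof (unfold subspace_def, intro conjI allI ballI)
  show "0 \<in> ?S"
    by (rule CollectI, rule exI[of _ "{}"], rule exI[of _ "\<lambda>_. 0"]) (auto simp: wt_0)
next
  fix x y assume "x \<in> ?S" "y \<in> ?S"
  then obtain H1 w1 H2 w2 where
    1: "finite H1" "\<forall>h. w1 h \<in> W h" "\<forall>h. h \<notin> H1 \<longrightarrow> w1 h = 0" "x = (\<Sum>h\<in>H1. w1 h)" and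
    2: "finite H2" "\<forall>h. w2 h \<in> W h" "\<forall>h. h \<notin> H2 \<longrightarrow> w2 h = 0" "y = (\<Sum>h\<in>H2. w2 h)"
    by blast
  have "x = (\<Sum>h\<in>H1 \<union> H2. w1 h)" "y = (\<Sum>h\<in>H1 \<union> H2. w2 h)"
    using 1 2 by (auto intro!: sum.mono_neutral_left)
  then have "x + y = (\<Sum>h\<in>H1 \<union> H2. w1 h + w2 h)" by (simp add: sum.distrib)
  moreover have "\<forall>h. w1 h + w2 h \<in> W h" using 1 2 wt_subspace subspace_add by blast
  ultimately show "x + y \<in> ?S" using 1 2
    by (intro CollectI exI[of _ "H1 \<union> H2"] exI[of _ "\<lambda>h. w1 h + w2 h"]) auto
next
  fix a x assume "x \<in> ?S"
  then obtain H w where H: "finite H" "\<forall>h. w h \<in> W h" "\<forall>h. h \<notin> H \<longrightarrow> w h = 0" "x = (\<Sum>h\<in>H. w h)"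
    by blast
  have "sc a x = (\<Sum>h\<in>H. sc a (w h))" using H by (simp add: scale_sum_right)
  moreover have "\<forall>h. sc a (w h) \<in> W h" using H wt_subspace subspace_scale by blast
  ultimately show "sc a x \<in> ?S" using H
    by (intro CollectI exI[of _ H] exI[of _ "\<lambda>h. sc a (w h)"]) auto
qed

lemma weight_decomposition:
  assumes "v \<in> C"
  obtains H w where "finite H" "\<And>h. w h \<in> W h" "\<And>h. h \<notin> H \<Longrightarrow> w h = 0" "v = (\<Sum>h\<in>H. w h)"
proof -
  let ?S = "{v. \<exists>H w. finite H \<and> (\<forall>h. w h \<in> W h) \<and> (\<forall>h. h \<notin> H \<longrightarrow> w h = 0) \<and> v = (\<Sum>h\<in>H. w h)}"
  have "x \<in> ?S" if "x \<in> W h" for x h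
    using that
    by (intro CollectI exI[of _ "{h}"] exI[of _ "\<lambda>h'. if h' = h then x else 0"]) (auto simp: wt_0)
  then have "span (\<Union>h. W h) \<subseteq> ?S"
    using weight_decomposition_subspace by (intro span_minimal) auto
  then show ?thesis using assms carrier_span_weights that by blast
qed

lemma carrier_induct_weights:
  assumes "v \<in> C"
    and "\<And>h v. v \<in> W h \<Longrightarrow> P v"
    and "\<And>x y. x \<in> C \<Longrightarrow> y \<in> C \<Longrightarrow> P x \<Longrightarrow> P y \<Longrightarrow> P (x + y)"
    and "P 0"
  shows "P v"
proof -
  obtain H w where H: "finite H" "\<And>h. w h \<in> W h" "v = (\<Sum>h\<in>H. w h)"
    using weight_decomposition[OF assms(1)] by blast
  have "P (\<Sum>h\<in>H. w h)" using H(1)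
  proof (induction H rule: finite_induct)
    case (insert x F)
    have "sum w F \<in> C" using H(2) wt_subset by (intro carrier_sum) auto
    then show ?case using insert assms(2)[OF H(2)] assms(3)[of "w x" "sum w F"] H(2) wt_subset by auto
  qed (use assms(4) in simp)
  then show ?thesis using H by simp
qed

text \<open>The Jacobi identity with \<open>a = \<omega>\<close>, \<open>m = 1\<close>, \<open>k = 0\<close> is the commutator formula \<open>[L(0), a\<^sub>n]\<close>.\<close>
lemma mode_wt:
  assumes a: "a \<in> W h1" and b: "b \<in> W h2"
  shows "YY a n b \<in> W (h1 + h2 - 2 * n - 2)"
proof -
  have aC: "a \<in> C" and bC: "b \<in> C" using a b wt_subset by auto
  let ?\<epsilon> = "if odd (4::int) \<and> odd h1 then -1 else 1 :: complex"
  have "fsum (\<lambda>i. sc (gbin 1 i) (YY (YY omega (0 + int i) a) (1 + n - int i) b))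
      = (\<Sum>i\<in>{0,1}. sc (gbin 1 i) (YY (YY omega (0 + int i) a) (1 + n - int i) b))"
    by (rule fsum_eq_sum) (auto simp: gbin_1_ge_2)
  also have "\<dots> = YY (L (-1) a) (n + 1) b + YY (L 0 a) n b"
    unfolding Lop_def by (simp add: add.commute)
  also have "\<dots> = sc (- of_int (n + 1)) (YY a n b) + sc (of_int h1 / 2) (YY a n b)"
    using L_minus1_derivative[OF aC bC, of "n + 1"] wtD[OF a] Y_scale_left[OF aC bC] by simp
  finally have lhs: "fsum (\<lambda>i. sc (gbin 1 i) (YY (YY omega (0 + int i) a) (1 + n - int i) b))
      = sc (- of_int (n + 1)) (YY a n b) + sc (of_int h1 / 2) (YY a n b)" .
  have "fsum (\<lambda>i. sc (sgn_int (int i) * gbin 0 i)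
          (YY omega (1 + 0 - int i) (YY a (n + int i) b)
           - sc (sgn_int 0 * ?\<epsilon>) (YY a (n + 0 - int i) (YY omega (1 + int i) b))))
      = L 0 (YY a n b) - YY a n (L 0 b)"
    by (subst fsum_eq_0th) (auto simp: gbin_0_left Lop_def)
  also have "\<dots> = L 0 (YY a n b) - sc (of_int h2 / 2) (YY a n b)"
    using wtD[OF b] Y_scale_right[OF aC bC] by simp
  finally have "L 0 (YY a n b) - sc (of_int h2 / 2) (YY a n b)
      = sc (- of_int (n + 1)) (YY a n b) + sc (of_int h1 / 2) (YY a n b)"
    using jacobi[OF omega_weight a bC, of 1 0 n] lhs by simp
  then have "L 0 (YY a n b)
      = sc (- of_int (n + 1)) (YY a n b) + sc (of_int h1 / 2) (YY a n b) + sc (of_int h2 / 2) (YY a n b)"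
    by (simp add: diff_eq_eq)
  also have "\<dots> = sc (of_int (h1 + h2 - 2 * n - 2) / 2) (YY a n b)"
  proof -
    have "(of_int (h1 + h2 - 2 * n - 2) / 2 :: complex) = - of_int (n + 1) + of_int h1 / 2 + of_int h2 / 2"
      by (simp add: field_simps)
    then show ?thesis by (simp only: scale_left_distrib)
  qed
  finally show ?thesis using Y_closed[OF aC bC] by (intro wtI) auto
qed

lemma mode_wt': "a \<in> W h1 \<Longrightarrow> b \<in> W h2 \<Longrightarrow> h = h1 + h2 - 2 * n - 2 \<Longrightarrow> YY a n b \<in> W h"
  using mode_wt by blast

text \<open>For \<open>x \<in> V\<^sub>0\<close> with \<open>L(-1) x = 0\<close> all modes \<open>x\<^sub>m\<close>, \<open>m \<noteq> -1\<close>, vanish, and the Jacobi identity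
  collapses to commutativity and associativity of \<open>x\<^sub>-\<^sub>1\<close>.\<close>
context
  fixes x assumes x_wt: "x \<in> W 0" and x_translation_invariant: "L (-1) x = 0"
begin

lemma translation_invariant_closed: "x \<in> C"
  using x_wt wt_subset by blast

lemma translation_invariant_mode_eq_0: "u \<in> C \<Longrightarrow> m \<noteq> -1 \<Longrightarrow> YY x m u = 0"
proof -
  assume u: "u \<in> C" "m \<noteq> -1"
  have "sc (- of_int (m + 1)) (YY x m u) = YY (L (-1) x) (m + 1) u"
    using L_minus1_derivative[OF translation_invariant_closed u(1), of "m + 1"] by simp
  also have "\<dots> = 0" using x_translation_invariant u(1) by simp
  finally have "sc (- of_int (m + 1)) (YY x m u) = 0" .
  moreover have "(- of_int (m + 1) :: complex) \<noteq> 0"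
    using u(2) by (metis add.inverse_neutral add_eq_0_iff2 minus_equation_iff of_int_eq_0_iff)
  ultimately show ?thesis by simp
qed

lemma translation_invariant_commute_wt:
  assumes b: "b \<in> W h" and u: "u \<in> C"
  shows "YY x (-1) (YY b n u) = YY b n (YY x (-1) u)"
proof -
  have bC: "b \<in> C" using b wt_subset by blast
  have "fsum (\<lambda>i. sc (gbin (-1) i) (YY (YY x (0 + int i) b) (-1 + n - int i) u)) = 0"
    unfolding fsum_def using translation_invariant_mode_eq_0[OF bC] u by simp
  moreover have "fsum (\<lambda>i. sc (sgn_int (int i) * gbin 0 i)
        (YY x (-1 + 0 - int i) (YY b (n + int i) u)
         - sc (sgn_int 0 * (if odd (0::int) \<and> odd h then -1 else 1)) (YY b (n + 0 - int i) (YY x (-1 + int i) u))))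
      = YY x (-1) (YY b n u) - YY b n (YY x (-1) u)"
    by (subst fsum_eq_0th) (auto simp: gbin_0_left)
  ultimately show ?thesis using jacobi[OF x_wt b u, of "-1" 0 n] by simp
qed

lemma translation_invariant_assoc_wt:
  assumes b: "b \<in> W h" and u: "u \<in> C"
  shows "YY (YY x (-1) b) n u = YY x (-1) (YY b n u)"
proof -
  have bC: "b \<in> C" using b wt_subset by blast
  have "fsum (\<lambda>i. sc (gbin 0 i) (YY (YY x (-1 + int i) b) (0 + n - int i) u)) = YY (YY x (-1) b) n u"
    by (subst fsum_eq_0th) (auto simp: gbin_0_left)
  moreover have "fsum (\<lambda>i. sc (sgn_int (int i) * gbin (-1) i)
        (YY x (0 + -1 - int i) (YY b (n + int i) u)
         - sc (sgn_int (-1) * (if odd (0::int) \<and> odd h then -1 else 1)) (YY b (n + -1 - int i) (YY x (0 + int i) u))))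
      = YY x (-1) (YY b n u)"
    using translation_invariant_mode_eq_0 Y_closed[OF bC u] u
    by (subst fsum_eq_0th) (auto simp: bC)
  ultimately show ?thesis using jacobi[OF x_wt b u, of 0 "-1" n] by simp
qed

lemma translation_invariant_commute:
  assumes b: "b \<in> C" and u: "u \<in> C"
  shows "YY x (-1) (YY b n u) = YY b n (YY x (-1) u)"
  using b
proof (rule carrier_induct_weights)
  fix h v assume "v \<in> W h"
  then show "YY x (-1) (YY v n u) = YY v n (YY x (-1) u)"
    using translation_invariant_commute_wt u by blast
qed (use u translation_invariant_closed Y_add_left Y_add_right Y_closed in auto)

lemma translation_invariant_assoc:
  assumes b: "b \<in> C" and u: "u \<in> C"
  shows "YY (YY x (-1) b) n u = YY x (-1) (YY b n u)"
  using b
proof (rule carrier_induct_weights)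
  fix h v assume "v \<in> W h"
  then show "YY (YY x (-1) v) n u = YY x (-1) (YY v n u)"
    using translation_invariant_assoc_wt u by blast
qed (use u translation_invariant_closed Y_add_left Y_add_right Y_closed in auto)

end

end

section \<open>Unitary vertex operator superalgebras\<close>

locale unitary_vosa = vosa sc V c for sc :: "complex \<Rightarrow> 'v::ab_group_add \<Rightarrow> 'v" and V c +
  fixes \<phi> :: "'v \<Rightarrow> 'v" and B :: "'v \<Rightarrow> 'v \<Rightarrow> complex"
  assumes involution: "antilinear_involution sc V \<phi>"
    and hermitian: "pos_hermitian_form sc (carrier V) B"
    and invariant: "invariant_form sc V \<phi> B"
begin

abbreviation "vacuum_line \<equiv> {sc \<alpha> vacuum | \<alpha>. True}"

lemma phi_closed: "a \<in> C \<Longrightarrow> \<phi> a \<in> C"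
  using involution unfolding antilinear_involution_def by blast
lemma phi_antilinear: "a \<in> C \<Longrightarrow> b \<in> C \<Longrightarrow> \<phi> (sc \<alpha> a + b) = sc (cnj \<alpha>) (\<phi> a) + \<phi> b"
  using involution unfolding antilinear_involution_def by blast
lemma phi_phi: "a \<in> C \<Longrightarrow> \<phi> (\<phi> a) = a"
  using involution unfolding antilinear_involution_def by blast
lemma phi_vacuum: "\<phi> vacuum = vacuum"
  using involution unfolding antilinear_involution_def by blast
lemma phi_omega: "\<phi> omega = omega"
  using involution unfolding antilinear_involution_def by blast
lemma phi_Y: "a \<in> C \<Longrightarrow> b \<in> C \<Longrightarrow> \<phi> (YY a n b) = YY (\<phi> a) n (\<phi> b)"
  using involution unfolding antilinear_involution_def by blast

lemma phi_add: "a \<in> C \<Longrightarrow> b \<in> C \<Longrightarrow> \<phi> (a + b) = \<phi> a + \<phi> b"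
  using phi_antilinear[of a b 1] by simp
lemma phi_scale: "a \<in> C \<Longrightarrow> \<phi> (sc \<alpha> a) = sc (cnj \<alpha>) (\<phi> a)"
  using phi_antilinear[of a 0 \<alpha>] carrier_0 phi_add[of 0 0] by simp
lemma phi_diff: "a \<in> C \<Longrightarrow> b \<in> C \<Longrightarrow> \<phi> (a - b) = \<phi> a - \<phi> b"
  using phi_add[of "a - b" b] carrier_diff by (simp add: eq_diff_eq)
lemma phi_L: "v \<in> C \<Longrightarrow> \<phi> (L n v) = L n (\<phi> v)"
  unfolding Lop_def using phi_Y omega_closed phi_omega by simp

lemma phi_wt: assumes "v \<in> W h" shows "\<phi> v \<in> W h"
proof -
  have v: "v \<in> C" "L 0 v = sc (of_int h / 2) v" using wtD[OF assms] by auto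
  have "L 0 (\<phi> v) = \<phi> (sc (of_int h / 2) v)" using phi_L[OF v(1), of 0, symmetric] v(2) by simp
  also have "\<dots> = sc (of_int h / 2) (\<phi> v)" using phi_scale[OF v(1)] by simp
  finally show ?thesis using phi_closed v by (intro wtI) auto
qed

lemma B_linear: "u1 \<in> C \<Longrightarrow> u2 \<in> C \<Longrightarrow> v \<in> C \<Longrightarrow> B (sc \<alpha> u1 + u2) v = \<alpha> * B u1 v + B u2 v"
  using hermitian unfolding pos_hermitian_form_def by blast
lemma B_hermitian: "u \<in> C \<Longrightarrow> v \<in> C \<Longrightarrow> B u v = cnj (B v u)"
  using hermitian unfolding pos_hermitian_form_def by blast
lemma B_pos: "v \<in> C \<Longrightarrow> v \<noteq> 0 \<Longrightarrow> 0 < Re (B v v)"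
  using hermitian unfolding pos_hermitian_form_def by blast

lemma B_add_left: "u1 \<in> C \<Longrightarrow> u2 \<in> C \<Longrightarrow> v \<in> C \<Longrightarrow> B (u1 + u2) v = B u1 v + B u2 v"
  using B_linear[of u1 u2 v 1] by simp
lemma B_0_left [simp]: "v \<in> C \<Longrightarrow> B 0 v = 0"
  using B_add_left[of 0 0 v] carrier_0 by simp
lemma B_scale_left: "u \<in> C \<Longrightarrow> v \<in> C \<Longrightarrow> B (sc \<alpha> u) v = \<alpha> * B u v"
  using B_linear[of u 0 v \<alpha>] carrier_0 by simp
lemma B_0_right [simp]: "u \<in> C \<Longrightarrow> B u 0 = 0"
  using B_hermitian[of u 0] carrier_0 by simp
lemma B_scale_right: "u \<in> C \<Longrightarrow> v \<in> C \<Longrightarrow> B u (sc \<alpha> v) = cnj \<alpha> * B u v"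
  using B_hermitian[of u "sc \<alpha> v"] B_scale_left[of v u \<alpha>] B_hermitian[of v u] carrier_scale by simp
lemma B_diff_left: "u1 \<in> C \<Longrightarrow> u2 \<in> C \<Longrightarrow> v \<in> C \<Longrightarrow> B (u1 - u2) v = B u1 v - B u2 v"
  using B_add_left[of "u1 - u2" u2 v] carrier_diff by (simp add: eq_diff_eq)
lemma B_nonneg: "v \<in> C \<Longrightarrow> 0 \<le> Re (B v v)"
  using B_pos[of v] by (cases "v = 0") auto
lemma B_eq_0: "v \<in> C \<Longrightarrow> B v v = 0 \<Longrightarrow> v = 0"
  using B_pos[of v] by fastforce

lemma B_invariant: "a \<in> W h \<Longrightarrow> u \<in> C \<Longrightarrow> v \<in> C \<Longrightarrow>
    B u (YY (\<phi> a) k v) = sgn_int (h * (h + 1) div 2) *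
      fsum (\<lambda>j. (1 / of_nat (fact j)) * B (YY ((L 1 ^^ j) a) (h - k - 2 - int j) u) v)"
  using invariant unfolding invariant_form_def by blast

lemma L_adjoint: assumes u: "u \<in> C" and v: "v \<in> C" shows "B u (L n v) = B (L (-n) u) v"
proof -
  have L1_funpow_omega: "(L 1 ^^ j) omega = 0" if "j \<noteq> 0" for j
    using that by (cases j) (auto simp: funpow_Suc_right L1_omega L_funpow_0 simp del: funpow.simps)
  have "B u (L n v) = B u (YY (\<phi> omega) (n + 1) v)" unfolding Lop_def phi_omega by simp
  also have "\<dots> = sgn_int (4 * (4 + 1) div 2) *
      fsum (\<lambda>j. (1 / of_nat (fact j)) * B (YY ((L 1 ^^ j) omega) (4 - (n + 1) - 2 - int j) u) v)"
    using B_invariant[OF omega_weight u v] .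
  also have "\<dots> = B (YY omega (1 - n) u) v"
    by (subst fsum_eq_0th) (auto simp: L1_funpow_omega u v sgn_int_def)
  also have "\<dots> = B (L (-n) u) v" unfolding Lop_def by (simp add: add.commute)
  finally show ?thesis .
qed

lemma L_adjoint': "u \<in> C \<Longrightarrow> v \<in> C \<Longrightarrow> B (L n u) v = B u (L (-n) v)"
  using L_adjoint[of u v "-n"] by simp

lemma L_minus1_funpow_adjoint: "u \<in> C \<Longrightarrow> v \<in> C \<Longrightarrow> B ((L (-1) ^^ j) u) v = B u ((L 1 ^^ j) v)"
proof (induction j arbitrary: v)
  case (Suc j)
  have "B ((L (-1) ^^ Suc j) u) v = B ((L (-1) ^^ j) u) (L 1 v)"
    using L_adjoint'[OF L_funpow_closed[OF Suc.prems(1)] Suc.prems(2), of "-1"] by simp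
  also have "\<dots> = B u ((L 1 ^^ Suc j) v)"
    using Suc.IH[of "L 1 v"] Suc.prems L_closed by (simp add: funpow_Suc_right del: funpow.simps)
  finally show ?case .
qed simp

lemma norm_L_minus1_quasi_primary:
  assumes v: "v \<in> W h" and L1v: "L 1 v = 0"
  shows "B (L (-1) v) (L (-1) v) = of_int h * B v v"
proof -
  have vC: "v \<in> C" using v wt_subset by blast
  have "L 1 (L (-1) v) = sc 2 (L 0 v)"
    using virasoro[OF vC, of 1 "-1"] L1v by simp
  also have "\<dots> = sc (of_int h) v" using wtD[OF v] by simp
  finally have "L 1 (L (-1) v) = sc (of_int h) v" .
  moreover have "B (L (-1) v) (L (-1) v) = B (L 1 (L (-1) v)) v"
    using L_adjoint[OF L_closed[OF vC] vC, of "-1"] by simp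
  ultimately show ?thesis using B_scale_left[OF vC vC] by simp
qed

text \<open>A nonzero vector of the lowest negative weight \<open>m\<close> is killed by \<open>L(1)\<close>,
  so \<open>L(-1)\<close> would map it to a vector of norm \<open>m \<parallel>v\<parallel>\<^sup>2 < 0\<close>.\<close>
lemma wt_neg: "h < 0 \<Longrightarrow> W h = {0}"
proof (rule ccontr)
  assume h: "h < 0" "W h \<noteq> {0}"
  obtain N where N: "\<forall>h<N. W h = {0}" using weights_bounded_below by blast
  define S where "S = {h. h < 0 \<and> W h \<noteq> {0}}"
  have S_finite: "finite S" unfolding S_def
    by (rule finite_subset[of _ "{N..<0}"]) (use N in \<open>auto simp: not_le[symmetric]\<close>)
  have "h \<in> S" using h S_def by auto
  define m where "m = Min S"
  have mS: "m \<in> S" using Min_in[OF S_finite] \<open>h \<in> S\<close> m_def by blast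
  then have m: "m < 0" using S_def by auto
  obtain v where v: "v \<in> W m" "v \<noteq> 0" using mS wt_0 S_def by blast
  have vC: "v \<in> C" using v wt_subset by blast
  have "m - 2 \<notin> S" using Min_le[OF S_finite, of "m - 2"] m_def by auto
  then have L1v: "L 1 v = 0" using L_wt[OF v(1), of 1] m S_def by auto
  have "Re (B (L (-1) v) (L (-1) v)) = of_int m * Re (B v v)"
    using norm_L_minus1_quasi_primary[OF v(1) L1v] by simp
  moreover have "0 \<le> Re (B (L (-1) v) (L (-1) v))" using B_nonneg L_closed vC by blast
  moreover have "0 < Re (B v v)" using B_pos vC v by blast
  ultimately show False using m by (smt (verit) mult_neg_pos of_int_less_0_iff)
qed

lemma wt0_L1_eq_0: "x \<in> W 0 \<Longrightarrow> L 1 x = 0"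
  using L_wt[of x 0 1] wt_neg[of "-2"] by simp

lemma wt0_translation_invariant: assumes x: "x \<in> W 0" shows "L (-1) x = 0"
proof -
  have "B (L (-1) x) (L (-1) x) = 0"
    using norm_L_minus1_quasi_primary[OF x wt0_L1_eq_0[OF x]] by simp
  then show ?thesis using B_eq_0 L_closed x wt_subset by blast
qed

lemma wt0_adjoint: assumes x: "x \<in> W 0" and u: "u \<in> C" and w: "w \<in> C"
  shows "B u (YY (\<phi> x) (-1) w) = B (YY x (-1) u) w"
proof -
  have L1_funpow: "(L 1 ^^ j) x = 0" if "j \<noteq> 0" for j
    using that wt0_L1_eq_0[OF x]
    by (cases j) (auto simp: funpow_Suc_right L_funpow_0 simp del: funpow.simps)
  have "B u (YY (\<phi> x) (-1) w) = sgn_int (0 * (0 + 1) div 2) *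
      fsum (\<lambda>j. (1 / of_nat (fact j)) * B (YY ((L 1 ^^ j) x) (0 - (-1) - 2 - int j) u) w)"
    using B_invariant[OF x u w] .
  also have "\<dots> = B (YY x (-1) u) w"
    by (subst fsum_eq_0th) (auto simp: L1_funpow u w)
  finally show ?thesis .
qed

lemma vacuum_mode_L_minus1_funpow:
  "y \<in> C \<Longrightarrow> YY y (-1 - int j) vacuum = sc (1 / of_nat (fact j)) ((L (-1) ^^ j) y)"
proof (induction j arbitrary: y)
  case 0 then show ?case using creation by simp
next
  case (Suc j)
  have "YY (L (-1) y) (-1 - int j) vacuum = sc (of_nat (Suc j)) (YY y (-1 - int (Suc j)) vacuum)"
    using L_minus1_derivative[OF Suc.prems vacuum_closed, of "-1 - int j"] by (simp add: algebra_simps)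
  moreover have "YY (L (-1) y) (-1 - int j) vacuum = sc (1 / of_nat (fact j)) ((L (-1) ^^ Suc j) y)"
    using Suc.IH[OF L_closed[OF Suc.prems]] by (simp add: funpow_Suc_right del: funpow.simps)
  ultimately have "sc (1 / of_nat (Suc j)) (sc (of_nat (Suc j)) (YY y (-1 - int (Suc j)) vacuum))
      = sc (1 / of_nat (Suc j)) (sc (1 / of_nat (fact j)) ((L (-1) ^^ Suc j) y))" by simp
  then show ?case by (simp del: of_nat_Suc add: of_nat_mult) (simp add: algebra_simps)
qed

lemma strong_CFT_type_if_wt0_vacuum_line:
  assumes wt0: "W 0 \<subseteq> vacuum_line" shows "strong_CFT_type sc V"
  unfolding strong_CFT_type_def
proof (intro conjI allI impI ballI)
  have "sc \<alpha> vacuum \<in> W 0" for \<alpha>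
    using subspace_scale[OF wt_subspace vacuum_wt] .
  then show "W 0 = vacuum_line" using wt0 by auto
next
  fix h :: int assume "h < 0" then show "W h = {0}" by (rule wt_neg)
next
  fix v assume v: "v \<in> W 2"
  have vC: "v \<in> C" using v wt_subset by blast
  obtain \<alpha> where \<alpha>: "L 1 v = sc \<alpha> vacuum" using L_wt[OF v, of 1] wt0 by auto
  have "\<alpha> * B vacuum vacuum = B v (L (-1) vacuum)"
    using L_adjoint'[OF vC vacuum_closed, of 1] \<alpha> B_scale_left[OF vacuum_closed vacuum_closed] by simp
  also have "\<dots> = 0" using L_vacuum[of "-1"] vC by simp
  finally have "\<alpha> = 0 \<or> vacuum = 0" using B_eq_0[OF vacuum_closed] by auto
  then show "L 1 v = 0" using \<alpha> by auto
qed

text \<open>Applying \<open>L(0) - h\<^sub>0/2\<close> removes the component of weight \<open>h\<^sub>0\<close> and rescales the others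
  by nonzero factors.\<close>
lemma ideal_homogeneous_components:
  assumes I: "vosa_ideal sc V I" and H: "finite H" and w: "\<And>h. w h \<in> W h" and sum: "sum w H \<in> I"
  shows "\<forall>h\<in>H. w h \<in> I"
  using H w sum
proof (induction H arbitrary: w rule: finite_induct)
  case (insert h0 F)
  have I_subspace: "subspace I" using I unfolding vosa_ideal_def by blast
  have wC: "\<And>h. w h \<in> C" using insert.prems(1) wt_subset by blast
  define w' where "w' h = sc ((of_int h - of_int h0) / 2) (w h)" for h
  have w'W: "\<And>h. w' h \<in> W h" unfolding w'_def using insert.prems(1) wt_subspace subspace_scale by blast
  let ?v = "sum w (insert h0 F)"
  have "L 0 ?v \<in> I" unfolding Lop_def using I omega_closed insert.prems(2) unfolding vosa_ideal_def by blast
  then have d: "L 0 ?v - sc (of_int h0 / 2) ?v \<in> I"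
    using insert.prems(2) I_subspace subspace_diff subspace_scale by blast
  have "L 0 (w h) = sc (of_int h / 2) (w h)" for h using wtD insert.prems(1) by blast
  then have "L 0 ?v = (\<Sum>h\<in>insert h0 F. sc (of_int h / 2) (w h))"
    using L_sum[of "insert h0 F" w 0] wC by simp
  moreover have "sc (of_int h0 / 2) ?v = (\<Sum>h\<in>insert h0 F. sc (of_int h0 / 2) (w h))"
    by (simp add: scale_sum_right)
  ultimately have "L 0 ?v - sc (of_int h0 / 2) ?v = (\<Sum>h\<in>insert h0 F. w' h)"
    unfolding w'_def
    by (simp add: sum_subtractf[symmetric] scale_left_diff_distrib[symmetric] diff_divide_distrib)
  also have "\<dots> = sum w' F" using insert.hyps unfolding w'_def by simp
  finally have "sum w' F \<in> I" using d by simp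
  then have w'I: "\<forall>h\<in>F. w' h \<in> I" using insert.IH[OF w'W] by blast
  have F: "\<forall>h\<in>F. w h \<in> I"
  proof
    fix h assume h: "h \<in> F"
    then have "(of_int h - of_int h0) / 2 \<noteq> (0::complex)" using insert.hyps by auto
    then have e: "1 / ((of_int h - of_int h0) / 2) * ((of_int h - of_int h0) / 2) = (1::complex)" by simp
    have "w h = sc (1 / ((of_int h - of_int h0) / 2)) (w' h)" unfolding w'_def scale_scale e by simp
    then show "w h \<in> I" using subspace_scale[OF I_subspace] w'I h by metis
  qed
  then have "sum w F \<in> I" by (intro subspace_sum[OF I_subspace]) auto
  then have "?v - sum w F \<in> I" using insert.prems(2) subspace_diff[OF I_subspace] by blast
  then show ?case using insert.hyps F by simp
qed simp

lemma ideal_homogeneous_element: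
  assumes I: "vosa_ideal sc V I" and v: "v \<in> I" "v \<noteq> 0"
  obtains h a where "a \<in> W h" "a \<in> I" "a \<noteq> 0"
proof -
  have vC: "v \<in> C" using I v unfolding vosa_ideal_def by blast
  obtain H w where H: "finite H" "\<And>h. w h \<in> W h" "v = (\<Sum>h\<in>H. w h)"
    using weight_decomposition[OF vC] by blast
  have "\<exists>h\<in>H. w h \<noteq> 0"
  proof (rule ccontr)
    assume "\<not> (\<exists>h\<in>H. w h \<noteq> 0)"
    then have "v = 0" using H(3) by simp
    then show False using v(2) by simp
  qed
  then obtain h where h: "h \<in> H" "w h \<noteq> 0" by blast
  have "w h \<in> I" using ideal_homogeneous_components[OF I H(1,2)] H(3) v(1) h(1) by blast
  then show ?thesis using that H(2) h(2) by blast
qed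

text \<open>By invariance and \<open>L(1)\<^sup>\<dagger> = L(-1)\<close> the pairing equals \<open>\<plusminus>\<Sum>\<^sub>j \<parallel>L(1)\<^sup>j a\<parallel>\<^sup>2 / j!\<^sup>2\<close>,
  whose \<open>j = 0\<close> term is positive.\<close>
lemma vacuum_pairing_nonzero:
  assumes a: "a \<in> W h" and a0: "a \<noteq> 0"
  shows "B vacuum (YY (\<phi> a) (h - 1) a) \<noteq> 0"
proof -
  have aC: "a \<in> C" using a wt_subset by blast
  have h0: "h \<ge> 0" using wt_neg[of h] a a0 by (cases "h < 0") auto
  define y where "y j = (L 1 ^^ j) a" for j
  have yC: "y j \<in> C" for j unfolding y_def using L_funpow_closed[OF aC] .
  define t where "t j = (1 / of_nat (fact j)) * B (YY ((L 1 ^^ j) a) (h - (h - 1) - 2 - int j) vacuum) a" for j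
  have t: "t j = complex_of_real ((1 / fact j) * (1 / fact j)) * B (y j) (y j)" for j
  proof -
    have "YY ((L 1 ^^ j) a) (h - (h - 1) - 2 - int j) vacuum = sc (1 / of_nat (fact j)) ((L (-1) ^^ j) (y j))"
      using vacuum_mode_L_minus1_funpow[OF yC, of j] unfolding y_def by simp
    then have "t j = (1 / of_nat (fact j)) * ((1 / of_nat (fact j)) * B ((L (-1) ^^ j) (y j)) a)"
      unfolding t_def using B_scale_left[OF L_funpow_closed[OF yC] aC] by simp
    also have "B ((L (-1) ^^ j) (y j)) a = B (y j) (y j)"
      using L_minus1_funpow_adjoint[OF yC aC] unfolding y_def by simp
    finally show ?thesis by simp
  qed
  have "y j = 0" if "j \<notin> {0..nat h}" for j
  proof -
    have "y j \<in> W (h - 2 * 1 * int j)" unfolding y_def using L_funpow_wt[OF a] .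
    then show ?thesis using wt_neg[of "h - 2 * 1 * int j"] that h0 by auto
  qed
  then have "fsum t = sum t {0..nat h}" by (intro fsum_eq_sum) (auto simp: t carrier_0)
  moreover have "Re (sum t {0..nat h}) > 0"
  proof -
    have "0 \<le> Re (t j)" for j
      using B_nonneg[OF yC, of j] by (simp add: t Re_divide_Reals fact_in_Reals)
    moreover have "Re (t 0) > 0" using t[of 0] B_pos[OF aC a0] unfolding y_def by simp
    ultimately show ?thesis
      using member_le_sum[of 0 "{0..nat h}" "\<lambda>j. Re (t j)"] by (simp add: Re_sum)
  qed
  ultimately have "fsum t \<noteq> 0" by (metis Re_sum less_irrefl zero_complex.sel(1))
  moreover have "sgn_int (h * (h + 1) div 2) \<noteq> 0" unfolding sgn_int_def by simp
  moreover have "B vacuum (YY (\<phi> a) (h - 1) a) = sgn_int (h * (h + 1) div 2) * fsum t"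
    unfolding t_def using B_invariant[OF a vacuum_closed aC] .
  ultimately show ?thesis by simp
qed

lemma simple_if_wt0_vacuum_line:
  assumes wt0: "W 0 \<subseteq> vacuum_line" shows "simple_VOSA sc V"
  unfolding simple_VOSA_def
proof (intro allI impI)
  fix I assume I: "vosa_ideal sc V I"
  then have I_subspace: "subspace I" and I_closed: "\<And>a v n. a \<in> C \<Longrightarrow> v \<in> I \<Longrightarrow> YY a n v \<in> I"
    unfolding vosa_ideal_def by blast+
  show "I = {0} \<or> I = C"
  proof (cases "I = {0}")
    case False
    then obtain v where "v \<in> I" "v \<noteq> 0" using subspace_0[OF I_subspace] by blast
    then obtain h a where a: "a \<in> W h" "a \<in> I" "a \<noteq> 0"
      using ideal_homogeneous_element[OF I] by blast
    define z where "z = YY (\<phi> a) (h - 1) a"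
    have zI: "z \<in> I" unfolding z_def using I_closed phi_closed a wt_subset by blast
    have "z \<in> W 0" unfolding z_def by (rule mode_wt'[OF phi_wt[OF a(1)] a(1)]) simp
    then obtain \<alpha> where \<alpha>: "z = sc \<alpha> vacuum" using wt0 by blast
    have "\<alpha> \<noteq> 0" using vacuum_pairing_nonzero[OF a(1,3)] \<alpha> vacuum_closed unfolding z_def by auto
    then have "vacuum = sc (1 / \<alpha>) z" using \<alpha> by simp
    then have "vacuum \<in> I" using subspace_scale[OF I_subspace zI] by simp
    have "C \<subseteq> I"
    proof
      fix b assume "b \<in> C"
      then show "b \<in> I" using I_closed[OF \<open>b \<in> C\<close> \<open>vacuum \<in> I\<close>, of "-1"] creation by simp
    qed
    then show ?thesis using I unfolding vosa_ideal_def by blast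
  qed simp
qed

lemma wt0_product_closed: "x \<in> W 0 \<Longrightarrow> v \<in> W 0 \<Longrightarrow> YY x (-1) v \<in> W 0"
  by (rule mode_wt') auto

lemma vacuum_nonzero: assumes "\<not> W 0 \<subseteq> vacuum_line" shows "vacuum \<noteq> 0"
proof
  assume "vacuum = 0"
  then have "v = sc 0 vacuum" if "v \<in> W 0" for v
    using creation[of v] that wt_subset by auto
  then show False using assms by blast
qed

lemma exists_real_wt0_nonscalar:
  assumes "\<not> W 0 \<subseteq> vacuum_line"
  obtains x where "x \<in> W 0" "\<phi> x = x" "x \<notin> vacuum_line"
proof -
  obtain a where a: "a \<in> W 0" "a \<notin> vacuum_line" using assms by blast
  have aC: "a \<in> C" and \<phi>aC: "\<phi> a \<in> C" using a phi_closed wt_subset by auto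
  have \<phi>a: "\<phi> a \<in> W 0" using phi_wt[OF a(1)] .
  define x where "x = sc (1/2) (a + \<phi> a)"
  define y where "y = sc (- \<i>/2) (a - \<phi> a)"
  have x: "x \<in> W 0" "\<phi> x = x"
  proof -
    show "x \<in> W 0" unfolding x_def using a \<phi>a wt_subspace by (intro subspace_scale subspace_add) auto
    show "\<phi> x = x"
      unfolding x_def using phi_scale[OF carrier_add[OF aC \<phi>aC]] phi_add[OF aC \<phi>aC] phi_phi[OF aC]
      by (simp add: add.commute)
  qed
  have y: "y \<in> W 0" "\<phi> y = y"
  proof -
    show "y \<in> W 0" unfolding y_def using a \<phi>a wt_subspace by (intro subspace_scale subspace_diff) auto
    have "\<phi> y = sc (cnj (- \<i>/2)) (\<phi> (a - \<phi> a))"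
      unfolding y_def using phi_scale[OF carrier_diff[OF aC \<phi>aC]] .
    also have "\<dots> = sc (\<i>/2) (\<phi> a - a)" using phi_diff[OF aC \<phi>aC] phi_phi[OF aC] by simp
    finally have "\<phi> y = sc (\<i>/2) (\<phi> a - a)" .
    then show "\<phi> y = y"
      unfolding y_def by (simp add: scale_right_diff_distrib scale_minus_left)
  qed
  have "sc \<i> y = sc (1/2) (a - \<phi> a)" unfolding y_def by (simp add: scale_scale)
  then have "x + sc \<i> y = sc (1/2) (a + a)" unfolding x_def by (simp add: scale_right_distrib[symmetric])
  also have "\<dots> = sc (1/2) (sc 2 a)" using scale_left_distrib[of 1 1 a] by simp
  also have "\<dots> = a" by simp
  finally have a_xy: "a = x + sc \<i> y" ..
  have "x \<notin> vacuum_line \<or> y \<notin> vacuum_line"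
  proof (rule ccontr)
    assume "\<not> ?thesis"
    then obtain \<alpha> \<beta> where "x = sc \<alpha> vacuum" "y = sc \<beta> vacuum" by blast
    then have "a = sc (\<alpha> + \<i> * \<beta>) vacuum" using a_xy by (simp add: scale_left_distrib scale_scale)
    then show False using a(2) by blast
  qed
  then show ?thesis using that x y by blast
qed

section \<open>The weight-zero algebra\<close>

definition mult_eigenspace :: "'v \<Rightarrow> complex \<Rightarrow> 'v set" where
  "mult_eigenspace x l = {v \<in> C. YY x (-1) v = sc l v}"

definition mult_range :: "'v \<Rightarrow> complex \<Rightarrow> 'v set" where
  "mult_range x l = {YY x (-1) u - sc l u | u. u \<in> C}"

lemma mult_eigenspace_subspace: assumes x_closed: "x \<in> C" shows "subspace (mult_eigenspace x l)"
  unfolding subspace_def mult_eigenspace_def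
  using x_closed carrier_0 carrier_add carrier_scale Y_add_right[OF x_closed] Y_scale_right[OF x_closed]
  by (auto simp: scale_right_distrib scale_left_commute)

lemma mult_range_subspace: assumes x_closed: "x \<in> C" shows "subspace (mult_range x l)"
  unfolding subspace_def
proof (intro conjI ballI allI)
  show "0 \<in> mult_range x l"
    unfolding mult_range_def using carrier_0 x_closed by (intro CollectI exI[of _ 0]) simp
next
  fix p q assume "p \<in> mult_range x l" "q \<in> mult_range x l"
  then obtain u v where uv: "u \<in> C" "v \<in> C" "p = YY x (-1) u - sc l u" "q = YY x (-1) v - sc l v"
    unfolding mult_range_def by blast
  have "YY x (-1) (u + v) - sc l (u + v) = (YY x (-1) u - sc l u) + (YY x (-1) v - sc l v)"
    using Y_add_right[OF x_closed uv(1,2)] by (simp add: scale_right_distrib algebra_simps)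
  then have "p + q = YY x (-1) (u + v) - sc l (u + v)" using uv(3,4) by simp
  then show "p + q \<in> mult_range x l" unfolding mult_range_def using uv carrier_add by blast
next
  fix a p assume "p \<in> mult_range x l"
  then obtain u where u: "u \<in> C" "p = YY x (-1) u - sc l u" unfolding mult_range_def by blast
  then have "sc a p = YY x (-1) (sc a u) - sc l (sc a u)"
    using Y_scale_right[OF x_closed] by (simp add: scale_right_diff_distrib scale_left_commute)
  then show "sc a p \<in> mult_range x l" unfolding mult_range_def using u carrier_scale by blast
qed

lemma mult_eigenspace_Y:
  "x \<in> W 0 \<Longrightarrow> a \<in> C \<Longrightarrow> v \<in> mult_eigenspace x l \<Longrightarrow> YY a n v \<in> mult_eigenspace x l"
  unfolding mult_eigenspace_def
  using translation_invariant_commute[OF _ wt0_translation_invariant] Y_closed Y_scale_right wt_subset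
  by (auto 4 3)

lemma mult_range_Y:
  assumes x_wt: "x \<in> W 0" and a: "a \<in> C" and v: "v \<in> mult_range x l" shows "YY a n v \<in> mult_range x l"
proof -
  have x_closed: "x \<in> C" using x_wt wt_subset by blast
  obtain u where u: "u \<in> C" "v = YY x (-1) u - sc l u" using v unfolding mult_range_def by blast
  have "YY a n v = YY x (-1) (YY a n u) - sc l (YY a n u)"
    using u a translation_invariant_commute[OF x_wt wt0_translation_invariant[OF x_wt]]
      Y_diff_right Y_scale_right Y_closed[OF x_closed] carrier_scale by simp
  then show ?thesis unfolding mult_range_def using Y_closed[OF a u(1)] by blast
qed

context
  fixes x assumes x_wt: "x \<in> W 0" and x_real: "\<phi> x = x"
begin

lemma real_wt0_closed: "x \<in> C"
  using x_wt wt_subset by blast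

lemma mult_x_self_adjoint: "u \<in> C \<Longrightarrow> v \<in> C \<Longrightarrow> B u (YY x (-1) v) = B (YY x (-1) u) v"
  using wt0_adjoint[OF x_wt, of u v] x_real by simp

lemma mult_x_eigenvalue_real:
  assumes w: "w \<in> C" "w \<noteq> 0" and eig: "YY x (-1) w = sc l w"
  shows "cnj l = l"
proof -
  have "B (YY x (-1) w) w = l * B w w" using eig B_scale_left[OF w(1) w(1)] by simp
  moreover have "B w (YY x (-1) w) = cnj l * B w w" using eig B_scale_right[OF w(1) w(1)] by simp
  ultimately have "(l - cnj l) * B w w = 0"
    using mult_x_self_adjoint[OF w(1) w(1)] by (simp add: algebra_simps)
  moreover have "B w w \<noteq> 0" using B_eq_0[OF w(1)] w(2) by blast
  ultimately show ?thesis by simp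
qed

lemma mult_x_shift_closed: "u \<in> C \<Longrightarrow> YY x (-1) u - sc l u \<in> C"
  using Y_closed[OF real_wt0_closed] carrier_scale carrier_diff by blast

text \<open>Self-adjointness: \<open>\<parallel>(x - l) z\<parallel>\<^sup>2 = B(z, (x - l)\<^sup>2 z)\<close> for real \<open>l\<close>.\<close>
lemma mult_x_semisimple:
  assumes l: "cnj l = l" and z: "z \<in> C"
    and sq: "YY x (-1) (YY x (-1) z - sc l z) - sc l (YY x (-1) z - sc l z) = 0"
  shows "YY x (-1) z - sc l z = 0"
proof -
  define d where "d = YY x (-1) z - sc l z"
  have dC: "d \<in> C" unfolding d_def using mult_x_shift_closed[OF z] .
  have "B (YY x (-1) z - sc l z) d = B (YY x (-1) z) d - l * B z d"
    using B_diff_left[OF Y_closed[OF real_wt0_closed z] carrier_scale[OF z] dC] B_scale_left[OF z dC] by simp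
  then have "B d d = B (YY x (-1) z) d - l * B z d" unfolding d_def .
  also have "B (YY x (-1) z) d = B z (sc l d)"
    using mult_x_self_adjoint[OF z dC] sq unfolding d_def by (simp add: eq_iff_diff_eq_0[symmetric])
  also have "\<dots> = l * B z d" using B_scale_right[OF z dC] l by simp
  finally show ?thesis using B_eq_0[OF dC] d_def by simp
qed

lemma vacuum_eigen_split:
  assumes "vacuum \<noteq> 0"
  obtains l e r where "e \<in> W 0" "e \<noteq> 0" "YY x (-1) e = sc l e" "r \<in> W 0"
    "vacuum = e + (YY x (-1) r - sc l r)"
proof -
  obtain S where S: "finite S" "W 0 \<subseteq> span S" using weight_space_finite_span by blast
  have "subspace_endomorphism sc (W 0) (YY x (-1))"
    by unfold_locales
      (use wt_subspace wt0_product_closed[OF x_wt] Y_add_right[OF real_wt0_closed] Y_scale_right[OF real_wt0_closed]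
        wt_subset in blast)+
  moreover have "YY x (-1) z - sc l z = 0"
    if z: "z \<in> W 0" and w: "w \<in> W 0" "w \<noteq> 0" "YY x (-1) w = sc l w"
      and sq: "YY x (-1) (YY x (-1) z - sc l z) - sc l (YY x (-1) z - sc l z) = 0" for l z w
  proof -
    have "cnj l = l" using mult_x_eigenvalue_real[of w l] w wt_subset by blast
    then show ?thesis using mult_x_semisimple[of l z] z sq wt_subset by blast
  qed
  ultimately show ?thesis
    using that eigenvector_plus_range[OF _ S vacuum_wt assms] by blast
qed

lemma mult_eigenspace_range_trivial:
  assumes l: "cnj l = l" and v: "v \<in> mult_eigenspace x l" "v \<in> mult_range x l"
  shows "v = 0"
proof -
  obtain u where u: "u \<in> C" "v = YY x (-1) u - sc l u" using v(2) unfolding mult_range_def by blast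
  have vC: "v \<in> C" and eig: "YY x (-1) v = sc l v" using v(1) unfolding mult_eigenspace_def by auto
  have "B v v = B (YY x (-1) u) v - l * B u v"
    using u B_diff_left[OF Y_closed[OF real_wt0_closed u(1)] carrier_scale[OF u(1)] vC] B_scale_left[OF u(1) vC] by simp
  also have "B (YY x (-1) u) v = l * B u v"
    using mult_x_self_adjoint[OF u(1) vC] eig B_scale_right[OF u(1) vC] l by simp
  finally show ?thesis using B_eq_0[OF vC] by simp
qed

lemma phi_mult_eigenspace:
  assumes l: "cnj l = l" and v: "v \<in> mult_eigenspace x l" shows "\<phi> v \<in> mult_eigenspace x l"
proof -
  have vC: "v \<in> C" and eig: "YY x (-1) v = sc l v" using v unfolding mult_eigenspace_def by auto
  have "YY x (-1) (\<phi> v) = \<phi> (YY x (-1) v)" using phi_Y[OF real_wt0_closed vC] x_real by simp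
  also have "\<dots> = sc l (\<phi> v)" using eig phi_scale[OF vC] l by simp
  finally show ?thesis unfolding mult_eigenspace_def using phi_closed[OF vC] by simp
qed

lemma phi_mult_range:
  assumes l: "cnj l = l" and v: "v \<in> mult_range x l" shows "\<phi> v \<in> mult_range x l"
proof -
  obtain u where u: "u \<in> C" "v = YY x (-1) u - sc l u" using v unfolding mult_range_def by blast
  have "\<phi> v = YY x (-1) (\<phi> u) - sc l (\<phi> u)"
    using u phi_diff[OF Y_closed[OF real_wt0_closed u(1)] carrier_scale[OF u(1)]] phi_Y[OF real_wt0_closed u(1)] x_real
      phi_scale[OF u(1)] l by simp
  then show ?thesis unfolding mult_range_def using phi_closed[OF u(1)] by blast
qed

end

lemma wt0_mult_commute:
  assumes a: "a \<in> W 0" and b: "b \<in> C"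
  shows "YY a (-1) b = YY b (-1) a"
proof -
  have aC: "a \<in> C" using a wt_subset by blast
  have "YY a (-1) b = YY a (-1) (YY b (-1) vacuum)" using creation[OF b] by simp
  also have "\<dots> = YY b (-1) (YY a (-1) vacuum)"
    using translation_invariant_commute[OF a wt0_translation_invariant[OF a] b vacuum_closed] .
  finally show ?thesis using creation[OF aC] by simp
qed

definition orthogonal_idempotents :: "'v \<Rightarrow> 'v \<Rightarrow> bool" where
  "orthogonal_idempotents e f \<longleftrightarrow>
     e \<in> W 0 \<and> f \<in> W 0 \<and> e + f = vacuum \<and> YY e (-1) f = 0 \<and> \<phi> e = e \<and> \<phi> f = f"

lemma orthogonal_idempotents_sym:
  "orthogonal_idempotents e f \<Longrightarrow> orthogonal_idempotents f e"
  unfolding orthogonal_idempotents_def using wt0_mult_commute[of f e] wt_subset by (auto simp: add.commute)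

lemma orthogonal_idempotents_idem:
  assumes "orthogonal_idempotents e f" shows "YY e (-1) e = e"
proof -
  have e: "e \<in> C" and f: "f \<in> C" and ef: "e + f = vacuum" "YY e (-1) f = 0"
    using assms wt_subset unfolding orthogonal_idempotents_def by auto
  have "e = YY e (-1) (e + f)" using creation[OF e] ef(1) by simp
  then show ?thesis using Y_add_right[OF e e f] ef(2) by simp
qed

text \<open>Split \<open>\<one>\<close> along a self-adjoint non-scalar \<open>x \<in> V\<^sub>0\<close>: \<open>\<one> = e + (x - l) r\<close> with \<open>x e = l e\<close>.
  The product \<open>e f\<close> lies both in the \<open>l\<close>-eigenspace and in the range of \<open>x - l\<close>, hence vanishes.\<close>
lemma exists_orthogonal_idempotents:
  assumes "\<not> W 0 \<subseteq> vacuum_line"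
  obtains e f where "orthogonal_idempotents e f" "e \<noteq> 0" "f \<noteq> 0"
proof -
  obtain x where x: "x \<in> W 0" "\<phi> x = x" "x \<notin> vacuum_line"
    using exists_real_wt0_nonscalar[OF assms] by blast
  have xC: "x \<in> C" using x wt_subset by blast
  obtain l e r where er: "e \<in> W 0" "e \<noteq> 0" "YY x (-1) e = sc l e" "r \<in> W 0"
      "vacuum = e + (YY x (-1) r - sc l r)"
    using vacuum_eigen_split[OF x(1,2) vacuum_nonzero[OF assms]] by blast
  have eC: "e \<in> C" and rC: "r \<in> C" using er wt_subset by auto
  have l: "cnj l = l" using mult_x_eigenvalue_real[OF x(1,2) eC er(2,3)] .
  define f where "f = YY x (-1) r - sc l r"
  have fW: "f \<in> W 0"
    unfolding f_def using wt0_product_closed[OF x(1) er(4)] er(4) wt_subspace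
    by (intro subspace_diff subspace_scale) auto
  have fC: "f \<in> C" using fW wt_subset by blast
  have ef: "e + f = vacuum" using er(5) f_def by simp
  have eK: "e \<in> mult_eigenspace x l" unfolding mult_eigenspace_def using eC er(3) by simp
  have fR: "f \<in> mult_range x l" unfolding f_def mult_range_def using rC by blast
  have "YY e (-1) f = 0"
  proof (rule mult_eigenspace_range_trivial[OF x(1,2) l])
    show "YY e (-1) f \<in> mult_eigenspace x l"
      unfolding wt0_mult_commute[OF er(1) fC] by (rule mult_eigenspace_Y[OF x(1) fC eK])
    show "YY e (-1) f \<in> mult_range x l" by (rule mult_range_Y[OF x(1) eC fR])
  qed
  moreover have \<phi>e: "\<phi> e = e"
  proof -
    have "e - \<phi> e = \<phi> f - f" using phi_add[OF eC fC] ef phi_vacuum by (simp add: algebra_simps)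
    moreover have "e - \<phi> e \<in> mult_eigenspace x l"
      using mult_eigenspace_subspace[OF xC] eK phi_mult_eigenspace[OF x(1,2) l eK]
      by (intro subspace_diff)
    moreover have "\<phi> f - f \<in> mult_range x l"
      using mult_range_subspace[OF xC] fR phi_mult_range[OF x(1,2) l fR] by (intro subspace_diff)
    ultimately have "e - \<phi> e = 0" using mult_eigenspace_range_trivial[OF x(1,2) l, of "e - \<phi> e"] by simp
    then show ?thesis by simp
  qed
  moreover have "\<phi> f = f" using phi_add[OF eC fC] ef phi_vacuum \<phi>e by simp
  moreover have "f \<noteq> 0"
  proof
    assume "f = 0"
    then have "x = sc l vacuum" using er(3) ef creation[OF xC] by simp
    then show False using x(3) by blast
  qed
  ultimately show ?thesis using that er(1,2) fW ef unfolding orthogonal_idempotents_def by blast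
qed

section \<open>Idempotent sub-VOSAs\<close>

context
  fixes e assumes e_wt: "e \<in> W 0" and e_idem: "YY e (-1) e = e" and e_real: "\<phi> e = e"
begin

abbreviation "Ve \<equiv> idempotent_subvosa V e"

lemma e_closed: "e \<in> C"
  using e_wt wt_subset by blast

lemma mult_e_commute: "b \<in> C \<Longrightarrow> u \<in> C \<Longrightarrow> YY e (-1) (YY b n u) = YY b n (YY e (-1) u)"
  using translation_invariant_commute[OF e_wt wt0_translation_invariant[OF e_wt]] .

lemma mult_e_assoc: "b \<in> C \<Longrightarrow> u \<in> C \<Longrightarrow> YY (YY e (-1) b) n u = YY e (-1) (YY b n u)"
  using translation_invariant_assoc[OF e_wt wt0_translation_invariant[OF e_wt]] .

lemma mult_e_idem: "u \<in> C \<Longrightarrow> YY e (-1) (YY e (-1) u) = YY e (-1) u"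
  using mult_e_assoc[OF e_closed, of u "-1"] e_idem by simp

lemma mult_e_in_subvosa: "u \<in> C \<Longrightarrow> YY e (-1) u \<in> carrier Ve"
  using Y_closed[OF e_closed] mult_e_idem by simp

lemma mult_e_Y:
  assumes a: "a \<in> C" and b: "b \<in> C"
  shows "YY e (-1) (YY a n b) = YY (YY e (-1) a) n (YY e (-1) b)"
proof -
  have "YY (YY e (-1) a) n (YY e (-1) b) = YY e (-1) (YY a n (YY e (-1) b))"
    using mult_e_assoc[OF a Y_closed[OF e_closed b]] .
  also have "\<dots> = YY e (-1) (YY e (-1) (YY a n b))" using mult_e_commute[OF a b] by simp
  also have "\<dots> = YY e (-1) (YY a n b)" using mult_e_idem[OF Y_closed[OF a b]] .
  finally show ?thesis by simp
qed

lemma subvosa_L: "v \<in> carrier Ve \<Longrightarrow> Lop Ve n v = L n v"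
proof -
  assume v: "v \<in> carrier Ve"
  have "Lop Ve n v = YY e (-1) (L n v)" unfolding Lop_def using mult_e_assoc omega_closed v by simp
  also have "\<dots> = L n v" unfolding Lop_def using mult_e_commute omega_closed v by simp
  finally show ?thesis .
qed

lemma subvosa_L_closed: "v \<in> carrier Ve \<Longrightarrow> L n v \<in> carrier Ve"
  using mult_e_commute[OF omega_closed, of v "n + 1"] L_closed[of v n] by (simp add: Lop_def)

lemma subvosa_L_funpow: "v \<in> carrier Ve \<Longrightarrow> (Lop Ve n ^^ j) v = (L n ^^ j) v"
proof (induction j)
  case (Suc j)
  have "(L n ^^ j) v \<in> carrier Ve"
    using Suc.prems by (induction j) (auto simp del: idempotent_subvosa_simps intro: subvosa_L_closed)
  then show ?case using Suc subvosa_L by simp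
qed simp

lemma subvosa_wt: "wt sc Ve h = W h \<inter> carrier Ve"
  unfolding wt_def using subvosa_L by auto

lemma mult_e_wt: "u \<in> W h \<Longrightarrow> YY e (-1) u \<in> wt sc Ve h"
  unfolding subvosa_wt using mode_wt'[OF e_wt, of u h h "-1"] mult_e_in_subvosa wt_subset by auto

lemma subvosa_carrier_subspace: "subspace (carrier Ve)"
  unfolding subspace_def
  using carrier_0 e_closed carrier_add carrier_scale Y_add_right[OF e_closed] Y_scale_right[OF e_closed]
  by auto

lemma subvosa_span_image:
  assumes v: "v \<in> carrier Ve" "v \<in> span S" and S: "S \<subseteq> C"
  shows "v \<in> span ((YY e (-1)) ` S)"
proof -
  obtain T r where T: "finite T" "T \<subseteq> S" "v = (\<Sum>a\<in>T. sc (r a) a)"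
    using v(2) unfolding span_explicit by blast
  have "v = YY e (-1) v" using v(1) by simp
  also have "\<dots> = (\<Sum>a\<in>T. sc (r a) (YY e (-1) a))"
    unfolding T(3) using T(2) S carrier_scale Y_scale_right[OF e_closed]
    by (subst Y_sum_right[OF e_closed]) (auto intro!: sum.cong)
  also have "\<dots> \<in> span ((YY e (-1)) ` S)"
    using T(2) by (intro span_sum span_scale span_base) auto
  finally show ?thesis .
qed

lemma subvosa_carrier_span_weights: "carrier Ve \<subseteq> span (\<Union>h. wt sc Ve h)"
proof
  fix v assume v: "v \<in> carrier Ve"
  have "(\<Union>h. W h) \<subseteq> C" using wt_subset by blast
  then have "v \<in> span ((YY e (-1)) ` (\<Union>h. W h))"
    using subvosa_span_image[OF v] subsetD[OF carrier_span_weights] v by simp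
  moreover have "(YY e (-1)) ` (\<Union>h. W h) \<subseteq> (\<Union>h. wt sc Ve h)"
    using mult_e_wt by blast
  ultimately show "v \<in> span (\<Union>h. wt sc Ve h)" using span_mono by blast
qed

lemma subvosa_weight_space_finite_span: "\<exists>S. finite S \<and> S \<subseteq> wt sc Ve h \<and> wt sc Ve h \<subseteq> span S"
proof -
  obtain S where S: "finite S" "S \<subseteq> W h" "W h \<subseteq> span S" using weight_space_finite_span by blast
  have "(YY e (-1)) ` S \<subseteq> wt sc Ve h" using mult_e_wt S(2) by blast
  moreover have "wt sc Ve h \<subseteq> span ((YY e (-1)) ` S)"
  proof
    fix v assume "v \<in> wt sc Ve h"
    then have "v \<in> carrier Ve" "v \<in> span S" using S(3) unfolding subvosa_wt by auto
    then show "v \<in> span ((YY e (-1)) ` S)" using subvosa_span_image S(2) wt_subset by blast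
  qed
  ultimately show "\<exists>S. finite S \<and> S \<subseteq> wt sc Ve h \<and> wt sc Ve h \<subseteq> span S"
    using S(1) by blast
qed

lemma subvosa_is_vosa: "vosa sc Ve c"
proof unfold_locales
  show "subspace (carrier Ve)" by (rule subvosa_carrier_subspace)
  show "vac Ve \<in> carrier Ve" using e_closed e_idem by simp
  have "YY e (-1) omega \<in> W 4" by (rule mode_wt'[OF e_wt omega_weight]) simp
  then show "cv Ve \<in> wt sc Ve 4"
    unfolding subvosa_wt using mult_e_in_subvosa[OF omega_closed] by simp
  show "\<forall>b\<in>carrier Ve. \<forall>n. Y Ve (vac Ve) n b = (if n = -1 then b else 0)"
    using translation_invariant_mode_eq_0[OF e_wt wt0_translation_invariant[OF e_wt]] by simp
  show "\<forall>a\<in>carrier Ve. Y Ve a (-1) (vac Ve) = a \<and> (\<forall>n\<ge>0. Y Ve a n (vac Ve) = 0)"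
  proof (intro ballI conjI allI impI)
    fix a n assume a: "a \<in> carrier Ve"
    then have aC: "a \<in> C" by simp
    have Ya: "Y Ve a m (vac Ve) = YY e (-1) (YY a m vacuum)" for m
      using mult_e_commute[OF aC vacuum_closed, of m] creation[OF e_closed] by simp
    show "Y Ve a (-1) (vac Ve) = a" using Ya[of "-1"] creation[OF aC] a by simp
    show "Y Ve a n (vac Ve) = 0" if "n \<ge> 0" using Ya[of n] creation_nonneg[OF aC that] e_closed by simp
  qed
  show "carrier Ve \<subseteq> span (\<Union>h. wt sc Ve h)" by (rule subvosa_carrier_span_weights)
  show "\<forall>h. \<exists>S. finite S \<and> S \<subseteq> wt sc Ve h \<and> wt sc Ve h \<subseteq> span S"
    using subvosa_weight_space_finite_span by blast
  obtain N where "\<forall>h<N. W h = {0}" using weights_bounded_below by blast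
  then have "\<forall>h<N. wt sc Ve h = {0}" unfolding subvosa_wt using carrier_0 e_closed by auto
  then show "\<exists>N. \<forall>h<N. wt sc Ve h = {0}" by blast
  show "\<forall>a\<in>carrier Ve. \<forall>n. \<forall>b\<in>carrier Ve. Y Ve a n b \<in> carrier Ve"
    using Y_closed mult_e_commute by simp
  show "\<forall>a\<in>carrier Ve. \<forall>n. \<forall>b1\<in>carrier Ve. \<forall>b2\<in>carrier Ve. \<forall>\<alpha>.
      Y Ve a n (sc \<alpha> b1 + b2) = sc \<alpha> (Y Ve a n b1) + Y Ve a n b2"
    using Y_linear_right by simp
  show "\<forall>a1\<in>carrier Ve. \<forall>a2\<in>carrier Ve. \<forall>n. \<forall>b\<in>carrier Ve. \<forall>\<alpha>.
      Y Ve (sc \<alpha> a1 + a2) n b = sc \<alpha> (Y Ve a1 n b) + Y Ve a2 n b"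
    using Y_linear_left by simp
  show "\<forall>a\<in>carrier Ve. \<forall>b\<in>carrier Ve. \<exists>N. \<forall>n\<ge>N. Y Ve a n b = 0"
    using Y_truncation by simp
  show "\<forall>m n. \<forall>v\<in>carrier Ve. Lop Ve m (Lop Ve n v) - Lop Ve n (Lop Ve m v)
      = sc (of_int (m - n)) (Lop Ve (m + n) v) + (if m + n = 0 then sc (c / 12 * of_int (m ^ 3 - m)) v else 0)"
    (is "\<forall>m n. \<forall>v\<in>_. ?virasoro m n v")
  proof (intro allI ballI)
    fix m n v assume v: "v \<in> carrier Ve"
    then show "?virasoro m n v"
      using virasoro[of v m n] subvosa_L[OF v] subvosa_L[OF subvosa_L_closed[OF v]] by simp
  qed
  show "\<forall>a\<in>carrier Ve. \<forall>n. \<forall>b\<in>carrier Ve. Y Ve (Lop Ve (-1) a) n b = sc (- of_int n) (Y Ve a (n - 1) b)"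
    using L_minus1_derivative subvosa_L by simp
  show "\<forall>h1 h2. \<forall>a\<in>wt sc Ve h1. \<forall>b\<in>wt sc Ve h2. \<forall>u\<in>carrier Ve. \<forall>m n k::int.
      fsum (\<lambda>i. sc (gbin m i) (Y Ve (Y Ve a (k + int i) b) (m + n - int i) u))
      = fsum (\<lambda>i. sc (sgn_int (int i) * gbin k i)
          (Y Ve a (m + k - int i) (Y Ve b (n + int i) u)
           - sc (sgn_int k * (if odd h1 \<and> odd h2 then -1 else 1)) (Y Ve b (n + k - int i) (Y Ve a (m + int i) u))))"
    unfolding subvosa_wt using jacobi by simp
qed

lemma subvosa_unitary: "unitary_VOSA sc Ve c \<phi>"
  unfolding unitary_VOSA_def vosa_iff_is_VOSA[symmetric]
proof (intro conjI exI)
  show "vosa sc Ve c" by (rule subvosa_is_vosa)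
  show "antilinear_involution sc Ve \<phi>"
    unfolding antilinear_involution_def
  proof (intro conjI ballI allI)
    fix a assume a: "a \<in> carrier Ve"
    then show "\<phi> a \<in> carrier Ve"
      using phi_closed phi_Y[OF e_closed, of a "-1"] e_real by simp
    show "\<phi> (\<phi> a) = a" using phi_phi a by simp
    fix b n \<alpha> assume b: "b \<in> carrier Ve"
    show "\<phi> (sc \<alpha> a + b) = sc (cnj \<alpha>) (\<phi> a) + \<phi> b" using phi_antilinear a b by simp
    show "\<phi> (Y Ve a n b) = Y Ve (\<phi> a) n (\<phi> b)" using phi_Y a b by simp
  next
    show "\<phi> (vac Ve) = vac Ve" using e_real by simp
    show "\<phi> (cv Ve) = cv Ve" using phi_Y[OF e_closed omega_closed] e_real phi_omega by simp
  qed
  show "pos_hermitian_form sc (carrier Ve) B"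
    unfolding pos_hermitian_form_def
  proof (intro conjI ballI allI impI)
    fix u1 u2 v \<alpha> assume "u1 \<in> carrier Ve" "u2 \<in> carrier Ve" "v \<in> carrier Ve"
    then show "B (sc \<alpha> u1 + u2) v = \<alpha> * B u1 v + B u2 v" using B_linear by simp
  next
    fix u v assume "u \<in> carrier Ve" "v \<in> carrier Ve"
    then show "B u v = cnj (B v u)" using B_hermitian[of u v] by simp
  next
    fix v assume "v \<in> carrier Ve" "v \<noteq> 0"
    then show "0 < Re (B v v)" using B_pos by simp
  qed
  show "invariant_form sc Ve \<phi> B"
    unfolding invariant_form_def
  proof (intro allI ballI)
    fix h a u v k assume a: "a \<in> wt sc Ve h" and u: "u \<in> carrier Ve" and v: "v \<in> carrier Ve"
    then have aW: "a \<in> W h" and aD: "a \<in> carrier Ve" unfolding subvosa_wt by auto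
    have "B u (YY (\<phi> a) k v) = sgn_int (h * (h + 1) div 2) *
        fsum (\<lambda>j. (1 / of_nat (fact j)) * B (YY ((L 1 ^^ j) a) (h - k - 2 - int j) u) v)"
      using B_invariant[OF aW] u v by simp
    then show "B u (Y Ve (\<phi> a) k v) = sgn_int (h * (h + 1) div 2) *
        fsum (\<lambda>j. (1 / of_nat (fact j)) * B (Y Ve ((Lop Ve 1 ^^ j) a) (h - k - 2 - int j) u) v)"
      using subvosa_L_funpow[OF aD] by simp
  qed
qed

end

lemma orthogonal_idempotentsD:
  assumes "orthogonal_idempotents e f"
  shows "e \<in> W 0" "YY e (-1) e = e" "\<phi> e = e"
  using assms orthogonal_idempotents_idem unfolding orthogonal_idempotents_def by auto

lemma orthogonal_idempotents_decompose:
  assumes ef: "orthogonal_idempotents e f" and u: "u \<in> C"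
  shows "YY e (-1) u + YY f (-1) u = u"
proof -
  have "e \<in> C" "f \<in> C" "e + f = vacuum"
    using ef wt_subset unfolding orthogonal_idempotents_def by auto
  then show ?thesis using Y_add_left[of e f u "-1"] vacuum_Y[OF u] u by simp
qed

lemma orthogonal_idempotents_annihilate:
  assumes ef: "orthogonal_idempotents e f" and u: "u \<in> C"
  shows "YY e (-1) (YY f (-1) u) = 0"
proof -
  have "f \<in> C" "YY e (-1) f = 0"
    using ef wt_subset unfolding orthogonal_idempotents_def by auto
  then show ?thesis
    using mult_e_assoc[OF orthogonal_idempotentsD[OF ef], of f u "-1"] u by simp
qed

lemma iso_append_bij:
  assumes ef: "orthogonal_idempotents e f"
    and g1: "vosa_iso sc (idempotent_subvosa V e) (dscale sc) (dsum k1 Vs1) g1"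
    and g2: "vosa_iso sc (idempotent_subvosa V f) (dscale sc) (dsum k2 Vs2) g2"
  shows "bij_betw (\<lambda>v. append_family k1 (g1 (YY e (-1) v)) (g2 (YY f (-1) v)))
    C (carrier (dsum (k1 + k2) (append_family k1 Vs1 Vs2)))"
    (is "bij_betw ?G C (carrier ?W)")
proof -
  have fe: "orthogonal_idempotents f e" using orthogonal_idempotents_sym[OF ef] .
  note e = orthogonal_idempotentsD[OF ef] and f = orthogonal_idempotentsD[OF fe]
  have eC: "e \<in> C" and fC: "f \<in> C" using e(1) f(1) wt_subset by auto
  note g1D = vosa_isoD[OF g1] and g2D = vosa_isoD[OF g2]
  have g1_closed: "g1 (YY e (-1) u) \<in> carrier (dsum k1 Vs1)" if "u \<in> C" for u
    using bij_betwE[OF g1D(1)] mult_e_in_subvosa[OF e that] by blast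
  have g2_closed: "g2 (YY f (-1) u) \<in> carrier (dsum k2 Vs2)" if "u \<in> C" for u
    using bij_betwE[OF g2D(1)] mult_e_in_subvosa[OF f that] by blast
  have "inj_on ?G C"
  proof (rule inj_onI)
    fix v w assume v: "v \<in> C" and w: "w \<in> C" and "?G v = ?G w"
    then have g: "g1 (YY e (-1) v) = g1 (YY e (-1) w)" "g2 (YY f (-1) v) = g2 (YY f (-1) w)"
      unfolding append_family_eq_iff[OF g1_closed[OF v] g1_closed[OF w]] by blast+
    have Ev: "YY e (-1) v = YY e (-1) w"
      using inj_onD[OF bij_betw_imp_inj_on[OF g1D(1)] g(1)] mult_e_in_subvosa[OF e] v w by blast
    have Fv: "YY f (-1) v = YY f (-1) w"
      using inj_onD[OF bij_betw_imp_inj_on[OF g2D(1)] g(2)] mult_e_in_subvosa[OF f] v w by blast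
    have "v = YY e (-1) v + YY f (-1) v" using orthogonal_idempotents_decompose[OF ef v] by simp
    also have "\<dots> = w" unfolding Ev Fv by (rule orthogonal_idempotents_decompose[OF ef w])
    finally show "v = w" .
  qed
  moreover have "carrier ?W \<subseteq> ?G ` C"
  proof
    fix z assume "z \<in> carrier ?W"
    then obtain x y where xy: "x \<in> carrier (dsum k1 Vs1)" "y \<in> carrier (dsum k2 Vs2)"
      "z = append_family k1 x y"
      unfolding dsum_append_carrier_iff by blast
    obtain a where a: "a \<in> carrier (idempotent_subvosa V e)" "x = g1 a"
      using xy(1) bij_betw_imp_surj_on[OF g1D(1)] by blast
    obtain b where b: "b \<in> carrier (idempotent_subvosa V f)" "y = g2 b"
      using xy(2) bij_betw_imp_surj_on[OF g2D(1)] by blast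
    have "YY e (-1) (a + b) = a" "YY f (-1) (a + b) = b"
      using a(1) b(1) Y_add_right[OF eC] Y_add_right[OF fC]
        orthogonal_idempotents_annihilate[OF ef, of b] orthogonal_idempotents_annihilate[OF fe, of a]
      by auto
    then have "z = ?G (a + b)" using a(2) b(2) xy(3) by simp
    moreover have "a + b \<in> C" using a(1) b(1) carrier_add by simp
    ultimately show "z \<in> ?G ` C" by blast
  qed
  moreover have "?G ` C \<subseteq> carrier ?W"
  proof
    fix z assume "z \<in> ?G ` C"
    then obtain v where "v \<in> C" "z = ?G v" by blast
    then show "z \<in> carrier ?W" unfolding dsum_append_carrier_iff using g1_closed g2_closed by blast
  qed
  ultimately show ?thesis unfolding bij_betw_def by blast
qed

lemma vosa_iso_append:
  assumes ef: "orthogonal_idempotents e f"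
    and g1: "vosa_iso sc (idempotent_subvosa V e) (dscale sc) (dsum k1 Vs1) g1"
    and g2: "vosa_iso sc (idempotent_subvosa V f) (dscale sc) (dsum k2 Vs2) g2"
  shows "vosa_iso sc V (dscale sc) (dsum (k1 + k2) (append_family k1 Vs1 Vs2))
    (\<lambda>v. append_family k1 (g1 (YY e (-1) v)) (g2 (YY f (-1) v)))"
    (is "vosa_iso _ _ _ ?W ?G")
  unfolding vosa_iso_def
proof (intro conjI ballI allI iso_append_bij[OF assms])
  note e = orthogonal_idempotentsD[OF ef] and f = orthogonal_idempotentsD[OF orthogonal_idempotents_sym[OF ef]]
  have eC: "e \<in> C" and fC: "f \<in> C" using e(1) f(1) wt_subset by auto
  note g1D = vosa_isoD[OF g1] and g2D = vosa_isoD[OF g2]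
  fix a b assume a: "a \<in> C" and b: "b \<in> C"
  show "?G (sc \<alpha> a + b) = dscale sc \<alpha> (?G a) + ?G b" for \<alpha>
    using g1D(2) g2D(2) Y_linear_right[OF eC a b] Y_linear_right[OF fC a b]
      mult_e_in_subvosa[OF e] mult_e_in_subvosa[OF f] a b
    by (simp add: append_family_linear)
  show "?G (YY a n b) = Y ?W (?G a) n (?G b)" for n
    using g1D(3) g2D(3) mult_e_Y[OF e a b] mult_e_Y[OF f a b]
      mult_e_in_subvosa[OF e] mult_e_in_subvosa[OF f] a b
    by (simp add: dsum_append_Y del: dsum_simps)
next
  note e = orthogonal_idempotentsD[OF ef] and f = orthogonal_idempotentsD[OF orthogonal_idempotents_sym[OF ef]]
  have eC: "e \<in> C" and fC: "f \<in> C" using e(1) f(1) wt_subset by auto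
  show "?G vacuum = vac ?W"
    using vosa_isoD(4)[OF g1] vosa_isoD(4)[OF g2] creation[OF eC] creation[OF fC]
    by (simp add: dsum_append_vac del: dsum_simps)
  show "?G omega = cv ?W"
    using vosa_isoD(5)[OF g1] vosa_isoD(5)[OF g2] by (simp add: dsum_append_cv del: dsum_simps)
qed

section \<open>Decomposition into simple summands\<close>

lemma unitary_VOSA: "unitary_VOSA sc V c \<phi>"
  unfolding unitary_VOSA_def vosa_iff_is_VOSA[symmetric]
  using involution hermitian invariant vosa_axioms by blast

lemma decomposition_if_wt0_vacuum_line:
  assumes "W 0 \<subseteq> vacuum_line" shows "simple_decomposition sc c V"
  unfolding simple_decomposition_def
  using unitary_VOSA strong_CFT_type_if_wt0_vacuum_line[OF assms] simple_if_wt0_vacuum_line[OF assms]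
    vosa_iso_dsum_single
  by (intro exI[of _ 1] exI[of _ "\<lambda>_. V"]) blast

lemma decomposition_append:
  assumes ef: "orthogonal_idempotents e f"
    and "simple_decomposition sc c (idempotent_subvosa V e)"
    and "simple_decomposition sc c (idempotent_subvosa V f)"
  shows "simple_decomposition sc c V"
proof -
  obtain k1 Vs1 g1 where Vs1: "\<forall>i<k1. (\<exists>\<psi>. unitary_VOSA sc (Vs1 i) c \<psi>) \<and>
      strong_CFT_type sc (Vs1 i) \<and> simple_VOSA sc (Vs1 i)"
    and g1: "vosa_iso sc (idempotent_subvosa V e) (dscale sc) (dsum k1 Vs1) g1"
    using assms(2) unfolding simple_decomposition_def by blast
  obtain k2 Vs2 g2 where Vs2: "\<forall>i<k2. (\<exists>\<psi>. unitary_VOSA sc (Vs2 i) c \<psi>) \<and>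
      strong_CFT_type sc (Vs2 i) \<and> simple_VOSA sc (Vs2 i)"
    and g2: "vosa_iso sc (idempotent_subvosa V f) (dscale sc) (dsum k2 Vs2) g2"
    using assms(3) unfolding simple_decomposition_def by blast
  have "\<forall>i<k1 + k2. (\<exists>\<psi>. unitary_VOSA sc (append_family k1 Vs1 Vs2 i) c \<psi>) \<and>
      strong_CFT_type sc (append_family k1 Vs1 Vs2 i) \<and> simple_VOSA sc (append_family k1 Vs1 Vs2 i)"
    using Vs1 Vs2 unfolding append_family_def by (auto dest: spec[of _ "_ - k1"])
  then show ?thesis
    unfolding simple_decomposition_def using vosa_iso_append[OF ef g1 g2] by blast
qed

lemma dim_wt0_subvosa_less:
  assumes ef: "orthogonal_idempotents e f" and f0: "f \<noteq> 0"
  shows "dim (wt sc (idempotent_subvosa V e) 0) < dim (W 0)"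
proof -
  note e = orthogonal_idempotentsD[OF ef]
  obtain S where S: "finite S" "W 0 \<subseteq> span S" using weight_space_finite_span by blast
  have "f \<in> W 0" "YY e (-1) f = 0" using ef unfolding orthogonal_idempotents_def by auto
  then have "dim (W 0 \<inter> carrier (idempotent_subvosa V e)) < dim (W 0)"
    using dim_less_if_finitely_spanned[OF subspace_inter[OF wt_subspace subvosa_carrier_subspace[OF e]] _ S]
      f0 by auto
  then show ?thesis using subvosa_wt[OF e] by simp
qed

end

lemma unitary_vosaI:
  assumes "unitary_VOSA sc V c \<phi>"
  obtains B where "unitary_vosa sc V c \<phi> B"
  using assms
  unfolding unitary_VOSA_def vosa_iff_is_VOSA[symmetric] unitary_vosa_def unitary_vosa_axioms_def
  by blast

theorem unitary_simple_decomposition: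
  assumes "unitary_VOSA sc V c \<phi>"
  shows "simple_decomposition sc c V"
  using assms
proof (induction "vector_space.dim sc (wt sc V 0)" arbitrary: V \<phi> rule: less_induct)
  case less
  obtain B where "unitary_vosa sc V c \<phi> B" using unitary_vosaI[OF less.prems] .
  then interpret unitary_vosa sc V c \<phi> B .
  show ?case
  proof (cases "W 0 \<subseteq> vacuum_line")
    case True
    then show ?thesis by (rule decomposition_if_wt0_vacuum_line)
  next
    case False
    then obtain e f where ef: "orthogonal_idempotents e f" "e \<noteq> 0" "f \<noteq> 0"
      by (rule exists_orthogonal_idempotents)
    note fe = orthogonal_idempotents_sym[OF ef(1)]
    show ?thesis
    proof (rule decomposition_append[OF ef(1)])
      show "simple_decomposition sc c (idempotent_subvosa V e)"
        using less.hyps[OF dim_wt0_subvosa_less[OF ef(1,3)]]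
          subvosa_unitary[OF orthogonal_idempotentsD[OF ef(1)]] .
      show "simple_decomposition sc c (idempotent_subvosa V f)"
        using less.hyps[OF dim_wt0_subvosa_less[OF fe ef(2)]]
          subvosa_unitary[OF orthogonal_idempotentsD[OF fe]] .
    qed
  qed
qed

theorem mainTheorem7:
  fixes sc :: "complex \<Rightarrow> 'v::ab_group_add \<Rightarrow> 'v"
    and V :: "'v vosa" and c :: complex and \<phi> :: "'v \<Rightarrow> 'v"
  assumes "unitary_VOSA sc V c \<phi>"
  shows "\<exists>(k::nat) (Vs :: nat \<Rightarrow> 'v vosa).
           (\<forall>i<k. (\<exists>\<psi>. unitary_VOSA sc (Vs i) c \<psi>) \<and>
                  strong_CFT_type sc (Vs i) \<and> simple_VOSA sc (Vs i)) \<and>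
           (\<exists>f. vosa_iso sc V (dscale sc) (dsum k Vs) f)"
  using unitary_simple_decomposition[OF assms] unfolding simple_decomposition_def .

end
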